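(* Let $a<0$, $b>0$, $k>0$, and let $M:\mathbb{R}^2\to\mathbb{R}^2$ be $C^2$ with $M(0)=0$ and $M'(0)=0$. For $\varepsilon>0$ consider the impacting system $$\begin{pmatrix}\dot x\\ \dot y\end{pmatrix}=\begin{pmatrix}ax-by\\ bx+ay\end{pmatrix}+M(x,y)\quad\text{if } y-\varepsilon<0,\qquad x\mapsto -k\varepsilon\ (\text{$y$ unchanged})\quad\text{if } y-\varepsilon=0.$$ If $$\frac{a}{b}\cdot\frac{3\pi}{2}-\frac{a}{b}\,\mathrm{arccot}(-k)+\frac12\ln(1+k^2)>\frac{a}{b}\Big(-\frac{\pi}{2}\Big)-\frac{a}{b}\,\mathrm{arccot}\Big(-\frac{a}{b}\Big)+\frac12\ln\Big(1+\frac{a^2}{b^2}\Big),$$ then for all sufficiently small $\varepsilon>0$ the system admits a finite-time stable limit cycle $(x_\varepsilon(t),y_\varepsilon(t))$ with exactly one impact per period, which shrinks to the origin as $\varepsilon\to0$.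
   Context: $\mathrm{arccot}$ takes values in $(0,\pi)$. A periodic orbit is finite-time stable if every trajectory starting in a sufficiently small neighborhood of it coincides with the periodic orbit (up to a time shift) after finite time. *)

theory Defs
  imports "HOL-Analysis.Analysis"
begin

text \<open>Inverse cotangent with values in (0, pi).\<close>
definition arccot :: "real \<Rightarrow> real" where
  "arccot u = pi / 2 - arctan u"

definition C2_map :: "(real \<times> real \<Rightarrow> real \<times> real) \<Rightarrow> bool" where
  "C2_map M \<longleftrightarrow> (\<exists>DM D2M.
      (\<forall>x. (M has_derivative blinfun_apply (DM x)) (at x)) \<and>
      (\<forall>x. (DM has_derivative blinfun_apply (D2M x)) (at x)) \<and>
      continuous_on UNIV D2M)"

definition vfield :: "real \<Rightarrow> real \<Rightarrow> (real \<times> real \<Rightarrow> real \<times> real) \<Rightarrow> real \<times> real \<Rightarrow> real \<times> real" where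
  "vfield a b M p = (a * fst p - b * snd p, b * fst p + a * snd p) + M p"

definition impact_times :: "real \<Rightarrow> (real \<Rightarrow> real \<times> real) \<Rightarrow> real set" where
  "impact_times eps z = {t. t > 0 \<and> (\<exists>x. (z \<longlongrightarrow> (x, eps)) (at_left t))}"

text \<open>z : [0,inf) -> R^2 is a (forward) trajectory of the impacting system starting at the
  initial state p (with snd p <= eps).  If p lies on the switching line y = eps, the impact
  rule is applied at time 0.  At impact times the state is the post-impact state
  (-k eps, eps) (right-continuous convention); between impacts the ODE holds.\<close>
definition impact_traj ::
  "real \<Rightarrow> real \<Rightarrow> real \<Rightarrow> (real \<times> real \<Rightarrow> real \<times> real) \<Rightarrow> real \<Rightarrow> real \<times> real \<Rightarrow> (real \<Rightarrow> real \<times> real) \<Rightarrow> bool"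
where
  "impact_traj a b k M eps p z \<longleftrightarrow>
     snd p \<le> eps \<and>
     z 0 = (if snd p = eps then (- k * eps, eps) else p) \<and>
     (\<forall>t\<ge>0. snd (z t) \<le> eps) \<and>
     (\<forall>t\<ge>0. (z has_vector_derivative vfield a b M (z t)) (at t within {t..})) \<and>
     (\<forall>t>0. if t \<in> impact_times eps z then z t = (- k * eps, eps)
            else (z has_vector_derivative vfield a b M (z t)) (at t))"

definition periodic_one_impact ::
  "real \<Rightarrow> real \<Rightarrow> real \<Rightarrow> (real \<times> real \<Rightarrow> real \<times> real) \<Rightarrow> real \<Rightarrow> (real \<Rightarrow> real \<times> real) \<Rightarrow> real \<Rightarrow> bool"
where
  "periodic_one_impact a b k M eps z T \<longleftrightarrow>
     impact_traj a b k M eps (z 0) z \<and> T > 0 \<and>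
     (\<forall>t\<ge>0. z (t + T) = z t) \<and>
     (\<forall>s\<ge>0. card (impact_times eps z \<inter> {s<..s + T}) = 1)"

definition finite_time_stable ::
  "real \<Rightarrow> real \<Rightarrow> real \<Rightarrow> (real \<times> real \<Rightarrow> real \<times> real) \<Rightarrow> real \<Rightarrow> (real \<Rightarrow> real \<times> real) \<Rightarrow> bool"
where
  "finite_time_stable a b k M eps z \<longleftrightarrow>
     (\<exists>\<delta>>0. \<forall>p w. infdist p (z ` {0..}) < \<delta> \<longrightarrow> impact_traj a b k M eps p w \<longrightarrow>
        (\<exists>t1\<ge>0. \<exists>s\<ge>0. \<forall>t\<ge>t1. w t = z (t + s)))"

end

theory Submission
  imports Defs
begin

text \<open>
  On the scale \<open>\<epsilon>\<close>, the flow near the origin is the linear spiral \<open>(a x - b y, b x + a y)\<close> up to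
  an error that is uniformly small, because \<open>M\<close> is flat at \<open>0\<close>. The linear flow from the
  post-impact point \<open>(-k, 1)\<close> reaches its largest height of the first revolution at a time
  \<open>t\<^sub>m\<close>, and the hypothesis says exactly that this height exceeds \<open>1\<close>. By a Gronwall estimate,
  for small \<open>\<epsilon>\<close> the true solution from \<open>(-k\<epsilon>, \<epsilon>)\<close> therefore crosses the switching line
  \<open>y = \<epsilon>\<close>; its first arrival time \<open>T\<close> is the period of a cycle with one impact per period,
  lying in the ball of radius \<open>2 \<surd>(1+k\<^sup>2) \<epsilon>\<close>.
  Every impact resets the state to the same point \<open>(-k\<epsilon>, \<epsilon>)\<close>, so a trajectory that impacts
  once coincides with the cycle from then on; and a trajectory starting close to the cycle must
  impact, since otherwise (Gronwall again) it would follow the cycle's flow across the line.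
\<close>

section \<open>Tools for ordinary differential equations\<close>

lemma has_vector_derivative_inner_self:
  fixes u :: "real \<Rightarrow> 'a::real_inner"
  assumes "(u has_vector_derivative u') (at s)"
  shows "((\<lambda>s. inner (u s) (u s)) has_real_derivative 2 * inner (u s) u') (at s)"
proof -
  have d: "(u has_derivative (\<lambda>h. h *\<^sub>R u')) (at s)"
    using assms by (simp add: has_vector_derivative_def)
  show ?thesis
    unfolding has_field_derivative_def
    by (rule has_derivative_eq_rhs[OF has_derivative_inner[OF d d]])
       (auto simp: fun_eq_iff inner_commute algebra_simps)
qed

lemma continuous_on_Icc_le_right_end:
  fixes \<phi> :: "real \<Rightarrow> real"
  assumes "a < c" "continuous_on {a..c} \<phi>" "\<forall>s\<in>{a..<c}. \<phi> s \<le> B"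
  shows "\<phi> c \<le> B"
proof -
  have "(\<phi> \<longlongrightarrow> \<phi> c) (at c within {a..c})"
    using assms(1,2) by (simp add: continuous_on_def)
  then have "(\<phi> \<longlongrightarrow> \<phi> c) (at c within {a..<c})"
    by (rule tendsto_within_subset) auto
  moreover have "at c within {a..<c} \<noteq> bot"
    using assms(1) by (simp add: at_within_eq_bot_iff)
  moreover have "\<forall>\<^sub>F s in at c within {a..<c}. \<phi> s \<le> B"
    using assms(3) by (auto simp: eventually_at_filter)
  ultimately show ?thesis using tendsto_upperbound by blast
qed

lemma continuous_on_Icc_bootstrap:
  fixes \<phi> :: "real \<Rightarrow> real"
  assumes cont: "continuous_on {a..b} \<phi>" and start: "\<phi> a < \<rho>" and "\<rho>' < \<rho>"
    and improve: "\<And>t. t \<in> {a..b} \<Longrightarrow> \<forall>s\<in>{a..t}. \<phi> s < \<rho> \<Longrightarrow> \<phi> t \<le> \<rho>'"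
  shows "\<forall>t\<in>{a..b}. \<phi> t < \<rho>"
proof (rule ccontr)
  define S where "S = {a..b} \<inter> \<phi> -` {\<rho>..}"
  assume "\<not> (\<forall>t\<in>{a..b}. \<phi> t < \<rho>)"
  then have "S \<noteq> {}" by (auto simp: S_def not_less)
  moreover have bdd: "bdd_below S" by (auto simp: S_def bdd_below_def)
  moreover have "closed S"
    unfolding S_def by (rule continuous_closed_preimage[OF cont]) auto
  ultimately have cS: "Inf S \<in> S" by (rule closed_contains_Inf)
  have before: "\<phi> s < \<rho>" if "a \<le> s" "s < Inf S" for s
    using cInf_lower[OF _ bdd, of s] that cS by (force simp: S_def)
  have "a < Inf S"
    using cS start by (auto simp: S_def order.order_iff_strict)
  moreover have "\<forall>s\<in>{a..<Inf S}. \<phi> s \<le> \<rho>'"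
    using improve before cS by (auto simp: S_def)
  ultimately have "\<phi> (Inf S) \<le> \<rho>'"
    using cS by (intro continuous_on_Icc_le_right_end continuous_on_subset[OF cont])
      (auto simp: S_def)
  then show False using cS \<open>\<rho>' < \<rho>\<close> by (simp add: S_def)
qed

lemma lipschitz_ode_dist_exp_bound:
  fixes w v :: "real \<Rightarrow> 'a::real_inner"
  assumes "a \<le> t" and wc: "continuous_on {a..t} w" and vc: "continuous_on {a..t} v"
    and wd: "\<And>s. a < s \<Longrightarrow> s < t \<Longrightarrow> (w has_vector_derivative F (w s)) (at s)"
    and vd: "\<And>s. a < s \<Longrightarrow> s < t \<Longrightarrow> (v has_vector_derivative F (v s)) (at s)"
    and lip: "\<And>x y. dist (F x) (F y) \<le> L * dist x y"
  shows "dist (w t) (v t) \<le> dist (w a) (v a) * exp (L * (t - a))"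
proof -
  define u where "u s = w s - v s" for s
  define g where "g s = inner (u s) (u s) * exp (-2 * L * (s - a))" for s
  have "g t \<le> g a"
  proof (rule DERIV_nonpos_imp_decreasing_open[OF \<open>a \<le> t\<close>])
    show "continuous_on {a..t} g"
      unfolding g_def u_def by (intro continuous_intros wc vc)
    fix s assume s: "a < s" "s < t"
    have "(u has_vector_derivative F (w s) - F (v s)) (at s)"
      unfolding u_def by (intro derivative_intros wd vd s)
    from has_vector_derivative_inner_self[OF this]
    have dg: "(g has_real_derivative 2 * exp (-2 * L * (s - a))
            * (inner (u s) (F (w s) - F (v s)) - L * inner (u s) (u s))) (at s)"
      unfolding g_def by (auto intro!: derivative_eq_intros simp: algebra_simps)
    have "inner (u s) (F (w s) - F (v s)) \<le> norm (u s) * norm (F (w s) - F (v s))"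
      by (rule norm_cauchy_schwarz)
    also have "\<dots> \<le> norm (u s) * (L * norm (u s))"
      using lip[of "w s" "v s"] by (intro mult_left_mono) (auto simp: dist_norm u_def)
    also have "\<dots> = L * inner (u s) (u s)"
      by (simp add: power2_norm_eq_inner[symmetric] power2_eq_square)
    finally have "2 * exp (-2 * L * (s - a))
        * (inner (u s) (F (w s) - F (v s)) - L * inner (u s) (u s)) \<le> 0"
      by (intro mult_nonneg_nonpos) auto
    with dg show "\<exists>y. (g has_real_derivative y) (at s) \<and> y \<le> 0" by blast
  qed
  then have "(norm (u t))\<^sup>2 * exp (-2 * L * (t - a)) * exp (2 * L * (t - a))
      \<le> (norm (u a))\<^sup>2 * exp (2 * L * (t - a))"
    by (intro mult_right_mono) (simp_all add: g_def power2_norm_eq_inner)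
  then have "(norm (u t))\<^sup>2 \<le> (norm (u a))\<^sup>2 * exp (2 * L * (t - a))"
    by (simp add: mult.assoc exp_add[symmetric])
  also have "\<dots> = (norm (u a) * exp (L * (t - a)))\<^sup>2"
    by (simp add: power_mult_distrib power2_eq_square exp_add[symmetric])
  finally have "norm (u t) \<le> norm (u a) * exp (L * (t - a))"
    by (rule power2_le_imp_le) simp
  then show ?thesis by (simp add: dist_norm u_def)
qed

text \<open>The estimate itself keeps \<open>w\<close> inside the tube where \<open>V\<close> agrees with \<open>F\<close>.\<close>
lemma lipschitz_ode_dist_exp_bound_in_tube:
  fixes w v :: "real \<Rightarrow> 'a::real_inner"
  assumes "a \<le> b" and wc: "continuous_on {a..b} w" and vc: "continuous_on {a..b} v"
    and wd: "\<And>t. a < t \<Longrightarrow> t < b \<Longrightarrow> (w has_vector_derivative V (w t)) (at t)"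
    and vd: "\<And>t. a < t \<Longrightarrow> t < b \<Longrightarrow> (v has_vector_derivative F (v t)) (at t)"
    and lip: "\<And>x y. dist (F x) (F y) \<le> L * dist x y" and "0 \<le> L"
    and agree: "\<And>t x. t \<in> {a..b} \<Longrightarrow> dist x (v t) < \<rho> \<Longrightarrow> V x = F x"
    and init: "dist (w a) (v a) \<le> \<delta>" and small: "\<delta> * exp (L * (b - a)) < \<rho>"
  shows "\<forall>t\<in>{a..b}. dist (w t) (v t) \<le> \<delta> * exp (L * (t - a))"
proof -
  have \<delta>0: "0 \<le> \<delta>" using init zero_le_dist order_trans by blast
  have estimate: "dist (w t) (v t) \<le> \<delta> * exp (L * (t - a))"
    if t: "t \<in> {a..b}" and tube: "\<forall>s\<in>{a..t}. dist (w s) (v s) < \<rho>" for t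
  proof -
    have "dist (w t) (v t) \<le> dist (w a) (v a) * exp (L * (t - a))"
    proof (rule lipschitz_ode_dist_exp_bound[OF _ _ _ _ _ lip])
      show "(w has_vector_derivative F (w s)) (at s)" if "a < s" "s < t" for s
        using wd[of s] agree[of s "w s"] tube that t by auto
    qed (use t in \<open>auto intro: vd continuous_on_subset[OF wc] continuous_on_subset[OF vc]\<close>)
    also have "\<dots> \<le> \<delta> * exp (L * (t - a))"
      using init by (intro mult_right_mono) auto
    finally show ?thesis .
  qed
  have "\<forall>t\<in>{a..b}. dist (w t) (v t) < \<rho>"
  proof (rule continuous_on_Icc_bootstrap[OF _ _ small])
    show "continuous_on {a..b} (\<lambda>t. dist (w t) (v t))"
      by (intro continuous_intros wc vc)
    have "\<delta> \<le> \<delta> * exp (L * (b - a))"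
      using \<delta>0 \<open>a \<le> b\<close> \<open>0 \<le> L\<close> by (simp add: mult_le_cancel_left1)
    then show "dist (w a) (v a) < \<rho>" using init small by linarith
    fix t assume "t \<in> {a..b}" "\<forall>s\<in>{a..t}. dist (w s) (v s) < \<rho>"
    then have "dist (w t) (v t) \<le> \<delta> * exp (L * (t - a))" by (rule estimate)
    also have "\<dots> \<le> \<delta> * exp (L * (b - a))"
      using \<delta>0 \<open>0 \<le> L\<close> \<open>t \<in> {a..b}\<close> by (intro mult_left_mono) (auto intro: mult_left_mono)
    finally show "dist (w t) (v t) \<le> \<delta> * exp (L * (b - a))" .
  qed
  then show ?thesis using estimate by auto
qed

lemma integral_exp_weight:
  fixes L c :: real
  assumes "0 \<le> c"
  shows "integral {0..c} (\<lambda>s. L * exp (2 * L * s)) = (exp (2 * L * c) - 1) / 2"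
proof -
  have "((\<lambda>s. L * exp (2 * L * s)) has_integral
      (\<lambda>s. exp (2 * L * s) / 2) c - (\<lambda>s. exp (2 * L * s) / 2) 0) {0..c}"
  proof (rule fundamental_theorem_of_calculus[OF assms])
    fix s
    have "((\<lambda>s. exp (2 * L * s) / 2) has_real_derivative L * exp (2 * L * s)) (at s)"
      by (auto intro!: derivative_eq_intros)
    then show "((\<lambda>s. exp (2 * L * s) / 2) has_vector_derivative L * exp (2 * L * s))
        (at s within {0..c})"
      by (simp add: has_real_derivative_iff_has_vector_derivative has_vector_derivative_at_within)
  qed
  from integral_unique[OF this] show ?thesis by (simp add: diff_divide_distrib)
qed

lemma bcontfun_clamp:
  fixes f :: "real \<Rightarrow> 'a::real_normed_vector"
  assumes "continuous_on {0..T} f" "0 \<le> T"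
  shows "(\<lambda>t. f (max 0 (min T t))) \<in> bcontfun"
proof -
  have "bounded (f ` {0..T})" by (intro compact_imp_bounded compact_continuous_image assms) auto
  then obtain B where B: "\<And>x. x \<in> {0..T} \<Longrightarrow> norm (f x) \<le> B" unfolding bounded_iff by blast
  have "norm (f (max 0 (min T t))) \<le> B" for t using B assms(2) by simp
  moreover have "continuous_on UNIV (\<lambda>t. f (max 0 (min T t)))"
    by (rule continuous_on_compose2[OF assms(1)]) (use assms(2) in \<open>auto intro!: continuous_intros\<close>)
  ultimately show ?thesis by (intro bcontfun_normI)
qed

lemma integral_lipschitz_weighted_diff:
  fixes F :: "'a::banach \<Rightarrow> 'a" and g1 g2 :: "real \<Rightarrow> 'a"
  assumes lip: "\<And>x y. dist (F x) (F y) \<le> L * dist x y" and "0 \<le> L" "0 \<le> c"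
    and int1: "(\<lambda>s. F (exp (2 * L * s) *\<^sub>R g1 s)) integrable_on {0..c}"
    and int2: "(\<lambda>s. F (exp (2 * L * s) *\<^sub>R g2 s)) integrable_on {0..c}"
    and D: "\<And>s. s \<in> {0..c} \<Longrightarrow> dist (g1 s) (g2 s) \<le> D"
  shows "norm (integral {0..c} (\<lambda>s. F (exp (2 * L * s) *\<^sub>R g1 s))
      - integral {0..c} (\<lambda>s. F (exp (2 * L * s) *\<^sub>R g2 s))) \<le> D * ((exp (2 * L * c) - 1) / 2)"
proof -
  have pointwise: "norm (F (exp (2 * L * s) *\<^sub>R g1 s) - F (exp (2 * L * s) *\<^sub>R g2 s))
      \<le> L * exp (2 * L * s) * D" if "s \<in> {0..c}" for s
  proof -
    have "norm (F (exp (2 * L * s) *\<^sub>R g1 s) - F (exp (2 * L * s) *\<^sub>R g2 s))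
        \<le> L * (exp (2 * L * s) * dist (g1 s) (g2 s))"
      using lip[of "exp (2 * L * s) *\<^sub>R g1 s" "exp (2 * L * s) *\<^sub>R g2 s"]
      by (simp add: dist_norm scaleR_diff_right[symmetric])
    also have "\<dots> \<le> L * (exp (2 * L * s) * D)"
      using D[OF that] \<open>0 \<le> L\<close> by (intro mult_left_mono) auto
    finally show ?thesis by (simp add: mult.assoc)
  qed
  have "norm (integral {0..c} (\<lambda>s. F (exp (2 * L * s) *\<^sub>R g1 s))
      - integral {0..c} (\<lambda>s. F (exp (2 * L * s) *\<^sub>R g2 s)))
      = norm (integral {0..c} (\<lambda>s. F (exp (2 * L * s) *\<^sub>R g1 s) - F (exp (2 * L * s) *\<^sub>R g2 s)))"
    using integral_diff[OF int1 int2] by simp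
  also have "\<dots> \<le> integral {0..c} (\<lambda>s. L * exp (2 * L * s) * D)"
    by (intro integral_norm_bound_integral integrable_diff int1 int2 pointwise
        integrable_continuous_interval continuous_intros)
  also have "\<dots> = D * ((exp (2 * L * c) - 1) / 2)"
    using integral_exp_weight[OF \<open>0 \<le> c\<close>, of L] by (simp add: mult.commute)
  finally show ?thesis .
qed

text \<open>Picard iteration in weighted form: with \<open>u t = e\<^sup>2\<^sup>L\<^sup>t g t\<close>, the Picard operator acting on \<open>g\<close>
  (with time clamped to \<open>[0, T]\<close>) is a \<open>1/2\<close>-contraction for the sup norm.\<close>
lemma lipschitz_ode_exists:
  fixes F :: "'a::banach \<Rightarrow> 'a"
  assumes lip: "\<And>x y. dist (F x) (F y) \<le> L * dist x y" and L: "0 < L" and T: "0 \<le> T"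
  shows "\<exists>u. u 0 = x0 \<and> (\<forall>t\<in>{0..T}. (u has_vector_derivative F (u t)) (at t within {0..T}))"
proof -
  define c where "c t = max 0 (min T t)" for t :: real
  have c: "c t \<in> {0..T}" "t \<in> {0..T} \<Longrightarrow> c t = t" for t using T by (auto simp: c_def)
  have F_cont: "continuous_on S F" for S
    by (rule lipschitz_on_continuous_on[of L UNIV F, THEN continuous_on_subset])
       (auto intro!: lipschitz_onI simp: lip L less_imp_le)
  have FU_cont: "continuous_on S (\<lambda>s. F (exp (2 * L * s) *\<^sub>R apply_bcontfun g s))" for g S
    by (intro continuous_on_compose2[OF F_cont] continuous_intros) auto
  define I where "I g x = integral {0..x} (\<lambda>s. F (exp (2 * L * s) *\<^sub>R apply_bcontfun g s))"
    for g :: "real \<Rightarrow>\<^sub>C 'a" and x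
  have I_deriv: "(I g has_vector_derivative F (exp (2 * L * x) *\<^sub>R g x)) (at x within {0..T})"
    if "x \<in> {0..T}" for g x
    unfolding I_def by (rule integral_has_vector_derivative[OF FU_cont that])
  define Q where "Q g = Bcontfun (\<lambda>t. exp (- 2 * L * c t) *\<^sub>R (x0 + I g (c t)))" for g
  have Q_apply: "Q g t = exp (- 2 * L * c t) *\<^sub>R (x0 + I g (c t))" for g t
  proof -
    have "continuous_on {0..T} (\<lambda>x. exp (- 2 * L * x) *\<^sub>R (x0 + I g x))"
      by (intro continuous_intros continuous_on_vector_derivative[OF I_deriv])
    from bcontfun_clamp[OF this T] show ?thesis
      unfolding Q_def c_def by (simp add: Bcontfun_inverse)
  qed
  have "dist (Q g1) (Q g2) \<le> 1/2 * dist g1 g2" for g1 g2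
  proof (rule dist_bound)
    fix t
    define D where "D = dist g1 g2"
    have "norm (I g1 (c t) - I g2 (c t)) \<le> D * ((exp (2 * L * c t) - 1) / 2)"
      unfolding I_def using L c(1)[of t]
      by (intro integral_lipschitz_weighted_diff[OF lip])
        (auto simp: D_def intro: dist_bounded integrable_continuous_interval[OF FU_cont])
    then have "dist (Q g1 t) (Q g2 t) \<le> exp (- 2 * L * c t) * (D * ((exp (2 * L * c t) - 1) / 2))"
      by (simp add: Q_apply dist_norm scaleR_diff_right[symmetric] mult_left_mono)
    also have "\<dots> = D * (1 - exp (- 2 * L * c t)) / 2"
      by (simp add: field_simps exp_minus[symmetric] exp_add[symmetric])
    also have "\<dots> \<le> D / 2"
      using mult_left_mono[of "1 - exp (- 2 * L * c t)" 1 D] by (simp add: D_def)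
    finally show "dist (Q g1 t) (Q g2 t) \<le> 1/2 * dist g1 g2" by (simp add: D_def)
  qed
  then obtain g where "Q g = g" using banach_fix_type[of "1/2" Q] by auto
  define u where "u t = exp (2 * L * t) *\<^sub>R apply_bcontfun g t" for t
  have u_eq: "u t = x0 + I g t" if "t \<in> {0..T}" for t
    using Q_apply[of g t] c(2)[OF that] \<open>Q g = g\<close>
    by (simp add: u_def exp_minus[symmetric] exp_add[symmetric])
  have "(u has_vector_derivative F (u t)) (at t within {0..T})" if "t \<in> {0..T}" for t
  proof (rule has_vector_derivative_transform[OF that])
    show "u x = x0 + I g x" if "x \<in> {0..T}" for x using u_eq[OF that] .
    show "((\<lambda>x. x0 + I g x) has_vector_derivative F (u t)) (at t within {0..T})"
      using I_deriv[OF that, of g] by (auto simp: u_def intro!: derivative_eq_intros)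
  qed
  moreover have "u 0 = x0" using u_eq[of 0] T by (simp add: I_def)
  ultimately show ?thesis by blast
qed

text \<open>The free parameter \<open>\<mu>\<close> comes from splitting \<open>2 \<beta> |u| \<le> \<beta> |u|\<^sup>2 / \<mu> + \<beta> \<mu>\<close>.\<close>
lemma norm_sq_le_of_affine_growth:
  fixes u u' :: "real \<Rightarrow> 'a::real_inner"
  assumes "0 \<le> t" and uc: "continuous_on {0..t} u" and u0: "u 0 = 0"
    and ud: "\<And>s. 0 < s \<Longrightarrow> s < t \<Longrightarrow> (u has_vector_derivative u' s) (at s)"
    and ub: "\<And>s. 0 < s \<Longrightarrow> s < t \<Longrightarrow> norm (u' s) \<le> \<nu> * norm (u s) + \<beta>"
    and "0 \<le> \<nu>" "0 \<le> \<beta>" "0 < \<mu>"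
  shows "(norm (u t))\<^sup>2 \<le> \<beta> * \<mu> * t * exp ((2 * \<nu> + \<beta> / \<mu>) * t)"
proof -
  define K where "K = 2 * \<nu> + \<beta> / \<mu>"
  have "0 \<le> K" using assms(6-8) by (simp add: K_def)
  define h where "h s = inner (u s) (u s) * exp (- K * s) - \<beta> * \<mu> * s" for s
  have "h t \<le> h 0"
  proof (rule DERIV_nonpos_imp_decreasing_open[OF \<open>0 \<le> t\<close>])
    show "continuous_on {0..t} h" unfolding h_def by (intro continuous_intros uc)
    fix s assume s: "0 < s" "s < t"
    from has_vector_derivative_inner_self[OF ud[OF s]]
    have dh: "(h has_real_derivative
        (2 * inner (u s) (u' s) - K * inner (u s) (u s)) * exp (- K * s) - \<beta> * \<mu>) (at s)"
      unfolding h_def by (auto intro!: derivative_eq_intros simp: algebra_simps)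
    define n where "n = norm (u s)"
    have "inner (u s) (u' s) \<le> n * norm (u' s)" unfolding n_def by (rule norm_cauchy_schwarz)
    also have "\<dots> \<le> n * (\<nu> * n + \<beta>)" using ub[OF s] by (intro mult_left_mono) (auto simp: n_def)
    finally have "2 * inner (u s) (u' s) \<le> 2 * \<nu> * n\<^sup>2 + 2 * \<beta> * n"
      by (simp add: algebra_simps power2_eq_square)
    moreover have "2 * \<beta> * n \<le> (\<beta> / \<mu>) * n\<^sup>2 + \<beta> * \<mu>"
    proof -
      have "\<beta> * (2 * n * \<mu>) \<le> \<beta> * (n\<^sup>2 + \<mu>\<^sup>2)"
        using sum_squares_bound[of n \<mu>] \<open>0 \<le> \<beta>\<close>
        by (intro mult_left_mono) (simp_all add: power2_eq_square algebra_simps)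
      then show ?thesis using \<open>0 < \<mu>\<close> by (simp add: field_simps power2_eq_square)
    qed
    ultimately have "2 * inner (u s) (u' s) - K * inner (u s) (u s) \<le> \<beta> * \<mu>"
      by (simp add: K_def n_def power2_norm_eq_inner[symmetric] algebra_simps)
    then have "(2 * inner (u s) (u' s) - K * inner (u s) (u s)) * exp (- K * s) \<le> \<beta> * \<mu> * 1"
      using \<open>0 \<le> K\<close> s assms(7,8)
      by (intro mult_mono) (auto intro: mult_nonneg_nonneg)
    with dh show "\<exists>y. (h has_real_derivative y) (at s) \<and> y \<le> 0" by auto
  qed
  then have "(norm (u t))\<^sup>2 * exp (- K * t) * exp (K * t) \<le> \<beta> * \<mu> * t * exp (K * t)"
    using u0 by (intro mult_right_mono) (simp_all add: h_def power2_norm_eq_inner)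
  then have "(norm (u t))\<^sup>2 \<le> \<beta> * \<mu> * t * exp (K * t)"
    by (simp add: mult.assoc exp_add[symmetric])
  then show ?thesis by (simp add: K_def)
qed

lemma has_vector_derivative_at_interior:
  assumes "(f has_vector_derivative D) (at t within {a..b})" "a < t" "t < b"
  shows "(f has_vector_derivative D) (at t)"
proof -
  have "(f has_vector_derivative D) (at t within {a<..<b})"
    using assms(1) by (rule has_vector_derivative_within_subset) auto
  then show ?thesis by (subst (asm) has_vector_derivative_within_open) (use assms in auto)
qed

lemma has_vector_derivative_snd:
  fixes w :: "real \<Rightarrow> 'a::real_normed_vector \<times> real"
  assumes "(w has_vector_derivative v) (at t within S)"
  shows "((\<lambda>t. snd (w t)) has_real_derivative snd v) (at t within S)"
  unfolding has_field_derivative_def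
  by (rule has_derivative_eq_rhs[OF has_derivative_snd[OF assms[unfolded has_vector_derivative_def]]])
     (simp add: fun_eq_iff)

lemma has_vector_derivative_shift_at:
  fixes f :: "real \<Rightarrow> 'a::real_normed_vector"
  assumes "(f has_vector_derivative D) (at (t - s))"
  shows "((\<lambda>t. f (t - s)) has_vector_derivative D) (at t)"
proof -
  have "((\<lambda>t. t - s) has_vector_derivative 1) (at t)"
    by (auto intro!: derivative_eq_intros simp: has_real_derivative_iff_has_vector_derivative[symmetric])
  from vector_diff_chain_at[OF this] assms show ?thesis by (simp add: o_def)
qed

lemma has_vector_derivative_shift_within:
  fixes f :: "real \<Rightarrow> 'a::real_normed_vector"
  assumes "(f has_vector_derivative D) (at (t - s) within (\<lambda>t. t - s) ` S)"
  shows "((\<lambda>t. f (t - s)) has_vector_derivative D) (at t within S)"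
proof -
  have "((\<lambda>t. t - s) has_vector_derivative 1) (at t within S)"
    by (auto intro!: derivative_eq_intros simp: has_real_derivative_iff_has_vector_derivative[symmetric])
  from vector_diff_chain_within[OF this] assms show ?thesis by (simp add: o_def)
qed

lemma continuous_on_Icc_from_right_derivative:
  fixes w :: "real \<Rightarrow> 'a::real_normed_vector"
  assumes "(w has_vector_derivative D) (at s within {s..})"
    and "\<And>t. s < t \<Longrightarrow> t \<le> s' \<Longrightarrow> isCont w t"
  shows "continuous_on {s..s'} w"
  unfolding continuous_on_eq_continuous_within
proof
  fix t assume t: "t \<in> {s..s'}"
  show "continuous (at t within {s..s'}) w"
  proof (cases "t = s")
    case True
    then show ?thesis
      using has_vector_derivative_continuous[OF assms(1)] continuous_within_subset by fastforce
  next
    case False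
    then show ?thesis using assms(2)[of t] t continuous_at_imp_continuous_within by auto
  qed
qed

lemma first_crossing_time:
  fixes f :: "real \<Rightarrow> real"
  assumes "0 < tm" and cont: "continuous_on {0..tm} f" and "f 0 = c"
    and "(f has_real_derivative d) (at 0 within {0..tm})" "d < 0" and "c < f tm"
  obtains T where "0 < T" "T < tm" "f T = c" "\<And>s. 0 < s \<Longrightarrow> s < T \<Longrightarrow> f s < c"
proof -
  obtain e where e: "0 < e" "\<And>h. 0 < h \<Longrightarrow> h \<le> tm \<Longrightarrow> h < e \<Longrightarrow> f h < c"
    using has_real_derivative_neg_dec_right[OF assms(4,5)] \<open>f 0 = c\<close> by auto
  define t0 where "t0 = min (e / 2) (tm / 2)"
  have t0: "0 < t0" "t0 < e" "t0 < tm" using e \<open>0 < tm\<close> by (auto simp: t0_def)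
  define S where "S = {t0..tm} \<inter> f -` {c..}"
  have "tm \<in> S" using t0 \<open>c < f tm\<close> by (simp add: S_def)
  moreover have bdd: "bdd_below S" unfolding S_def bdd_below_def by auto
  moreover have "closed S"
    unfolding S_def by (rule continuous_closed_preimage) (use cont t0 in \<open>auto intro: continuous_on_subset\<close>)
  ultimately have TS: "Inf S \<in> S" by (intro closed_contains_Inf) auto
  have "Inf S \<le> tm" by (rule cInf_lower[OF \<open>tm \<in> S\<close> bdd])
  have below: "f s < c" if "0 < s" "s < Inf S" for s
  proof (cases "s < e")
    case True then show ?thesis using e(2)[of s] that \<open>Inf S \<le> tm\<close> by simp
  next
    case False
    have "s \<notin> S" using cInf_lower[OF _ bdd, of s] that by auto
    then show ?thesis using False t0 that \<open>Inf S \<le> tm\<close> by (auto simp: S_def)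
  qed
  have "f (Inf S) \<le> c"
  proof (rule continuous_on_Icc_le_right_end[of "t0 / 2" "Inf S" f])
    show "t0 / 2 < Inf S" "continuous_on {t0 / 2..Inf S} f"
      using TS t0 \<open>Inf S \<le> tm\<close> by (auto simp: S_def intro: continuous_on_subset[OF cont])
    show "\<forall>s\<in>{t0 / 2..<Inf S}. f s \<le> c" using below t0 by (auto intro: less_imp_le)
  qed
  then have "f (Inf S) = c" using TS by (simp add: S_def)
  moreover have "0 < Inf S" "Inf S < tm"
    using TS t0 \<open>Inf S \<le> tm\<close> \<open>c < f tm\<close> calculation by (auto simp: S_def less_le)
  ultimately show ?thesis using below that by blast
qed

lemma has_derivative_zero_bound:
  fixes M :: "'a::real_normed_vector \<Rightarrow> 'b::real_normed_vector"
  assumes "M 0 = 0" "(M has_derivative (\<lambda>h. 0)) (at 0)" "0 < \<eta>"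
  shows "\<exists>r>0. \<forall>p. norm p \<le> r \<longrightarrow> norm (M p) \<le> \<eta> * norm p"
proof -
  obtain d where "0 < d" "\<forall>y. norm (y - 0) < d \<longrightarrow> norm (M y - M 0 - 0) \<le> \<eta> * norm (y - 0)"
    using assms(2,3) unfolding has_derivative_at_alt by blast
  then show ?thesis using assms(1) by (intro exI[of _ "d / 2"]) auto
qed

lemma C2_map_lipschitz_on_cball:
  assumes "C2_map M"
  shows "\<exists>LM>0. \<forall>x\<in>cball 0 1. \<forall>y\<in>cball 0 1. norm (M x - M y) \<le> LM * norm (x - y)"
proof -
  from assms obtain DM D2M where
    d1: "\<And>x. (M has_derivative blinfun_apply (DM x)) (at x)" and
    d2: "\<And>x. (DM has_derivative blinfun_apply (D2M x)) (at x)"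
    unfolding C2_map_def by blast
  have "continuous_on (cball 0 1) DM"
    using d2 has_derivative_continuous continuous_at_imp_continuous_on by blast
  then have "bounded (DM ` cball 0 1)"
    by (intro compact_imp_bounded compact_continuous_image) auto
  then obtain B where B: "\<And>x. x \<in> cball 0 1 \<Longrightarrow> norm (DM x) \<le> B"
    unfolding bounded_iff by blast
  have "0 \<le> B" using B[of 0] by (meson norm_ge_zero order_trans centre_in_cball zero_le_one)
  have "norm (M x - M y) \<le> B * norm (x - y)" if "x \<in> cball 0 1" "y \<in> cball 0 1" for x y
  proof (rule differentiable_bound[of "cball 0 1" M "\<lambda>x. blinfun_apply (DM x)"])
    show "(M has_derivative blinfun_apply (DM x)) (at x within cball 0 1)" for x
      using d1 by (rule has_derivative_at_withinI)
    show "onorm (blinfun_apply (DM x)) \<le> B" if "x \<in> cball 0 1" for x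
      using B[OF that] by (simp add: norm_blinfun.rep_eq)
  qed (use that in auto)
  then have "\<forall>x\<in>cball 0 1. \<forall>y\<in>cball 0 1. norm (M x - M y) \<le> (B + 1) * norm (x - y)"
    by (smt (verit, best) mult_right_mono norm_ge_zero)
  then show ?thesis using \<open>0 \<le> B\<close> by (intro exI[of _ "B + 1"]) auto
qed

section \<open>The linear flow\<close>

definition linear_flow :: "real \<Rightarrow> real \<Rightarrow> real \<Rightarrow> real \<Rightarrow> real \<times> real" where
  "linear_flow a b k t = (exp (a * t) * (- k * cos (b * t) - sin (b * t)),
                          exp (a * t) * (cos (b * t) - k * sin (b * t)))"

definition linear_field :: "real \<Rightarrow> real \<Rightarrow> real \<times> real \<Rightarrow> real \<times> real" where
  "linear_field a b p = (a * fst p - b * snd p, b * fst p + a * snd p)"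

lemma vfield_eq_linear_field: "vfield a b M p = linear_field a b p + M p"
  by (simp add: vfield_def linear_field_def)

lemma linear_flow_0: "linear_flow a b k 0 = (- k, 1)"
  by (simp add: linear_flow_def)

lemma linear_flow_has_vector_derivative:
  "(linear_flow a b k has_vector_derivative linear_field a b (linear_flow a b k t)) (at t within S)"
proof -
  have "((\<lambda>t. linear_flow a b k t) has_vector_derivative linear_field a b (linear_flow a b k t))
      (at t within S)"
    unfolding linear_flow_def linear_field_def
    by (auto intro!: derivative_eq_intros has_vector_derivative_Pair
        simp: has_real_derivative_iff_has_vector_derivative[symmetric] algebra_simps)
  then show ?thesis by simp
qed

lemma norm_linear_field: "norm (linear_field a b p) = sqrt (a\<^sup>2 + b\<^sup>2) * norm p"
proof -
  have "(a * fst p - b * snd p)\<^sup>2 + (b * fst p + a * snd p)\<^sup>2 = (a\<^sup>2 + b\<^sup>2) * ((fst p)\<^sup>2 + (snd p)\<^sup>2)"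
    by (simp add: algebra_simps power2_eq_square)
  then show ?thesis unfolding linear_field_def norm_prod_def by (simp add: real_sqrt_mult)
qed

lemma linear_field_diff: "linear_field a b p - linear_field a b q = linear_field a b (p - q)"
  by (simp add: linear_field_def algebra_simps)

lemma norm_linear_flow: "norm (linear_flow a b k t) = exp (a * t) * sqrt (1 + k\<^sup>2)"
proof -
  have "(exp (a * t) * (- k * cos (b * t) - sin (b * t)))\<^sup>2
      + (exp (a * t) * (cos (b * t) - k * sin (b * t)))\<^sup>2
      = (exp (a * t))\<^sup>2 * ((1 + k\<^sup>2) * ((sin (b * t))\<^sup>2 + (cos (b * t))\<^sup>2))"
    by algebra
  then show ?thesis unfolding linear_flow_def norm_prod_def by (simp add: real_sqrt_mult)
qed

lemma snd_linear_flow_after_turn: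
  fixes a b c k :: real
  assumes "0 < b"
  defines "t \<equiv> (2 * pi - arctan c - arctan k) / b"
  shows "snd (linear_flow a b k t) = exp (a * t) * sqrt (1 + k\<^sup>2) / sqrt (1 + c\<^sup>2)"
proof -
  define Ca where "Ca = 1 / sqrt (1 + c\<^sup>2)"
  define Cb where "Cb = 1 / sqrt (1 + k\<^sup>2)"
  have ca: "cos (arctan c) = Ca" "sin (arctan c) = c * Ca"
    by (simp_all add: Ca_def cos_arctan sin_arctan)
  have cb: "cos (arctan k) = Cb" "sin (arctan k) = k * Cb"
    by (simp_all add: Cb_def cos_arctan sin_arctan)
  have "b * t = 2 * pi - (arctan c + arctan k)" using assms by (simp add: t_def)
  then have "cos (b * t) - k * sin (b * t) = cos (arctan c + arctan k) + k * sin (arctan c + arctan k)"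
    by (simp add: cos_diff sin_diff)
  also have "\<dots> = Ca * (Cb * (1 + k\<^sup>2))"
    by (simp add: cos_add sin_add ca cb algebra_simps power2_eq_square)
  also have "Cb * (1 + k\<^sup>2) = sqrt (1 + k\<^sup>2)"
    unfolding Cb_def by (simp add: real_div_sqrt add_pos_nonneg)
  finally show ?thesis by (simp add: linear_flow_def Ca_def)
qed

lemma exp_half_ln: "0 < x \<Longrightarrow> exp (ln x / 2) = sqrt x"
  using powr_half_sqrt[of x] by (simp add: powr_def)

text \<open>Writing \<open>snd (linear_flow a b k t) = e\<^sup>a\<^sup>t \<surd>(1+k\<^sup>2) cos (b t + arctan k)\<close>, the time at which
  the previous lemma evaluates it for \<open>c = -a/b\<close> is where this height is maximal in the first
  revolution; the hypothesis of the theorem says exactly that this maximal height exceeds \<open>1\<close>.\<close>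
lemma linear_flow_rises_above_one:
  fixes a b k :: real
  assumes "a < 0" and "b > 0" and "k > 0"
    and hyp: "(a / b) * (3 * pi / 2) - (a / b) * arccot (- k) + ln (1 + k\<^sup>2) / 2
         > (a / b) * (- pi / 2) - (a / b) * arccot (- a / b) + ln (1 + a\<^sup>2 / b\<^sup>2) / 2"
  shows "\<exists>tm>0. snd (linear_flow a b k tm) > 1"
proof -
  define c where "c = - a / b"
  define tm where "tm = (2 * pi - arctan c - arctan k) / b"
  have "arctan c < pi / 2" "arctan k < pi / 2" using arctan_ubound by auto
  then have "tm > 0" using assms pi_gt3 by (simp add: tm_def)
  have ac1: "arccot (- k) = pi / 2 + arctan k" by (simp add: arccot_def arctan_minus)
  have ac2: "arccot (- a / b) = pi / 2 - arctan c" by (simp add: arccot_def c_def)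
  have c2: "a\<^sup>2 / b\<^sup>2 = c\<^sup>2" by (simp add: c_def power_divide)
  have atm: "a * tm = (a / b) * (2 * pi - arctan c - arctan k)" by (simp add: tm_def)
  from hyp have "0 < a * tm + ln (1 + k\<^sup>2) / 2 - ln (1 + c\<^sup>2) / 2"
    unfolding ac1 ac2 c2 atm by (simp add: algebra_simps add_divide_distrib)
  then have "1 < exp (a * tm + ln (1 + k\<^sup>2) / 2 - ln (1 + c\<^sup>2) / 2)" by simp
  also have "\<dots> = snd (linear_flow a b k tm)"
    using snd_linear_flow_after_turn[OF \<open>b > 0\<close>, where a = a and c = c and k = k]
    by (simp add: exp_add exp_diff exp_half_ln add_pos_nonneg tm_def)
  finally show ?thesis using \<open>tm > 0\<close> by auto
qed

section \<open>The truncated field and its solution from the post-impact point\<close>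

text \<open>Freezing the field outside a ball by the nearest-point retraction makes it globally
  Lipschitz, so that solutions exist for all times.\<close>
definition trunc_field ::
  "real \<Rightarrow> real \<Rightarrow> (real \<times> real \<Rightarrow> real \<times> real) \<Rightarrow> real \<Rightarrow> real \<times> real \<Rightarrow> real \<times> real"
where "trunc_field a b M R p = vfield a b M (closest_point (cball 0 R) p)"

lemma trunc_field_eq: "norm p \<le> R \<Longrightarrow> trunc_field a b M R p = vfield a b M p"
  by (simp add: trunc_field_def closest_point_self)

lemma norm_closest_point_cball: "0 \<le> R \<Longrightarrow> norm (closest_point (cball 0 R) p) \<le> R"
  using closest_point_in_set[of "cball 0 R" p] by simp

lemma trunc_field_lipschitz:
  assumes "0 \<le> R" "R \<le> 1" and "0 \<le> LM"
    and lipM: "\<forall>x\<in>cball 0 1. \<forall>y\<in>cball 0 1. norm (M x - M y) \<le> LM * norm (x - y)"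
  shows "dist (trunc_field a b M R x) (trunc_field a b M R y) \<le> (sqrt (a\<^sup>2 + b\<^sup>2) + LM) * dist x y"
proof -
  define pr where "pr = closest_point (cball (0::real \<times> real) R)"
  have pr_norm: "norm (pr x) \<le> R" for x
    unfolding pr_def using norm_closest_point_cball[OF \<open>0 \<le> R\<close>] .
  have pr_lip: "dist (pr x) (pr y) \<le> dist x y"
    unfolding pr_def using assms(1) by (intro closest_point_lipschitz) auto
  have "trunc_field a b M R x - trunc_field a b M R y
      = linear_field a b (pr x - pr y) + (M (pr x) - M (pr y))"
    by (simp add: trunc_field_def pr_def vfield_eq_linear_field linear_field_diff[symmetric])
  then have "dist (trunc_field a b M R x) (trunc_field a b M R y)
      \<le> norm (linear_field a b (pr x - pr y)) + norm (M (pr x) - M (pr y))"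
    by (simp add: dist_norm norm_triangle_ineq)
  also have "\<dots> \<le> sqrt (a\<^sup>2 + b\<^sup>2) * norm (pr x - pr y) + LM * norm (pr x - pr y)"
    using lipM pr_norm[of x] pr_norm[of y] assms(2) by (auto simp: norm_linear_field)
  also have "\<dots> \<le> (sqrt (a\<^sup>2 + b\<^sup>2) + LM) * dist x y"
    using pr_lip \<open>0 \<le> LM\<close> by (simp add: dist_norm distrib_right[symmetric] mult_left_mono)
  finally show ?thesis .
qed

lemma linear_field_scaleR: "linear_field a b (c *\<^sub>R p) = c *\<^sub>R linear_field a b p"
  by (simp add: linear_field_def algebra_simps)

lemma norm_scaled_linear_flow_le:
  "a < 0 \<Longrightarrow> 0 \<le> s \<Longrightarrow> 0 \<le> \<epsilon> \<Longrightarrow> norm (\<epsilon> *\<^sub>R linear_flow a b k s) \<le> sqrt (1 + k\<^sup>2) * \<epsilon>"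
  by (simp add: norm_linear_flow mult_nonpos_nonneg mult_left_le_one_le mult.commute
      mult.left_commute mult_left_mono)

lemma norm_le_of_near_linear_flow:
  assumes "a < 0" "0 \<le> t" "0 < \<epsilon>" "\<gamma> \<le> 1/2"
    and "norm (x - \<epsilon> *\<^sub>R linear_flow a b k t) \<le> \<gamma> * \<epsilon>"
  shows "norm x \<le> 3/2 * (sqrt (1 + k\<^sup>2) * \<epsilon>)"
proof -
  have "norm x \<le> norm (\<epsilon> *\<^sub>R linear_flow a b k t) + \<gamma> * \<epsilon>"
    using assms(5) norm_triangle_sub[of x "\<epsilon> *\<^sub>R linear_flow a b k t"] by simp
  moreover have "norm (\<epsilon> *\<^sub>R linear_flow a b k t) \<le> sqrt (1 + k\<^sup>2) * \<epsilon>"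
    using assms(1-3) by (intro norm_scaled_linear_flow_le) auto
  moreover have "\<gamma> * \<epsilon> \<le> 1/2 * (sqrt (1 + k\<^sup>2) * \<epsilon>)"
    using assms(3,4) by (simp add: mult_right_mono order_trans[OF _ mult_right_mono])
  ultimately show ?thesis by linarith
qed

lemma snd_gt_of_near_linear_flow:
  assumes "0 < \<epsilon>" "\<gamma> < snd (linear_flow a b k t) - 1"
    and "norm (x - \<epsilon> *\<^sub>R linear_flow a b k t) \<le> \<gamma> * \<epsilon>"
  shows "\<epsilon> < snd x"
proof -
  have "\<bar>snd x - \<epsilon> * snd (linear_flow a b k t)\<bar> \<le> \<gamma> * \<epsilon>"
    using assms(3) dist_snd_le[of x "\<epsilon> *\<^sub>R linear_flow a b k t"] by (simp add: dist_norm dist_real_def)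
  moreover have "\<epsilon> * 1 < \<epsilon> * (snd (linear_flow a b k t) - \<gamma>)"
    using assms(1,2) by (intro mult_strict_left_mono) auto
  ultimately show ?thesis by (simp add: algebra_simps)
qed

lemma trunc_field_near_linear_field:
  assumes "0 \<le> R" "R \<le> r" "0 \<le> \<eta>" and small: "\<And>p. norm p \<le> r \<Longrightarrow> norm (M p) \<le> \<eta> * norm p"
    and "norm q \<le> R"
  shows "norm (trunc_field a b M R x - linear_field a b q) \<le> sqrt (a\<^sup>2 + b\<^sup>2) * norm (x - q) + \<eta> * R"
proof -
  define pr where "pr = closest_point (cball (0::real \<times> real) R)"
  have "pr q = q" using assms(5) by (simp add: pr_def closest_point_self)
  have "norm (pr x) \<le> R" unfolding pr_def by (rule norm_closest_point_cball[OF assms(1)])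
  have "trunc_field a b M R x = linear_field a b (pr x) + M (pr x)"
    by (simp add: trunc_field_def pr_def vfield_eq_linear_field)
  then have "trunc_field a b M R x - linear_field a b q = linear_field a b (pr x - pr q) + M (pr x)"
    using \<open>pr q = q\<close> by (simp add: linear_field_diff[symmetric])
  then have "norm (trunc_field a b M R x - linear_field a b q)
      \<le> sqrt (a\<^sup>2 + b\<^sup>2) * norm (pr x - pr q) + norm (M (pr x))"
    using norm_triangle_ineq[of "linear_field a b (pr x - pr q)" "M (pr x)"]
    by (simp add: norm_linear_field)
  also have "\<dots> \<le> sqrt (a\<^sup>2 + b\<^sup>2) * norm (x - q) + \<eta> * R"
  proof (rule add_mono)
    show "sqrt (a\<^sup>2 + b\<^sup>2) * norm (pr x - pr q) \<le> sqrt (a\<^sup>2 + b\<^sup>2) * norm (x - q)"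
      unfolding pr_def dist_norm[symmetric] using assms(1)
      by (intro mult_left_mono closest_point_lipschitz) auto
    show "norm (M (pr x)) \<le> \<eta> * R"
      using small[of "pr x"] \<open>norm (pr x) \<le> R\<close> assms(2,3) by (meson mult_left_mono order_trans)
  qed
  finally show ?thesis .
qed

lemma trunc_solution_tracks_linear_flow:
  fixes sol :: "real \<Rightarrow> real \<times> real"
  assumes "a < 0" "0 < \<epsilon>" "0 \<le> \<eta>" "0 \<le> \<gamma>" and R: "R = 2 * sqrt (1 + k\<^sup>2) * \<epsilon>" "R \<le> r"
    and small: "\<And>p. norm p \<le> r \<Longrightarrow> norm (M p) \<le> \<eta> * norm p"
    and sol0: "sol 0 = (- k * \<epsilon>, \<epsilon>)"
    and sol_deriv: "\<And>t. t \<in> {0..tm} \<Longrightarrow>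
      (sol has_vector_derivative trunc_field a b M R (sol t)) (at t within {0..tm})"
    and h1: "2 * \<eta> * sqrt (1 + k\<^sup>2) \<le> 1"
    and h2: "2 * \<eta> * sqrt (1 + k\<^sup>2) * tm * exp ((2 * sqrt (a\<^sup>2 + b\<^sup>2) + 1) * tm) \<le> \<gamma>\<^sup>2"
    and t: "t \<in> {0..tm}"
  shows "norm (sol t - \<epsilon> *\<^sub>R linear_flow a b k t) \<le> \<gamma> * \<epsilon>"
proof -
  define K0 where "K0 = sqrt (1 + k\<^sup>2)"
  define \<nu> where "\<nu> = sqrt (a\<^sup>2 + b\<^sup>2)"
  define u where "u t = sol t - \<epsilon> *\<^sub>R linear_flow a b k t" for t
  have "1 \<le> K0" "0 \<le> \<nu>" by (simp_all add: K0_def \<nu>_def)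
  have "0 \<le> R" using R \<open>0 < \<epsilon>\<close> by simp
  have "(norm (u t))\<^sup>2 \<le> (\<eta> * R) * \<epsilon> * t * exp ((2 * \<nu> + (\<eta> * R) / \<epsilon>) * t)"
  proof (rule norm_sq_le_of_affine_growth)
    have "continuous_on {0..t} sol"
      by (rule continuous_on_subset[OF continuous_on_vector_derivative[OF sol_deriv]]) (use t in auto)
    then show "continuous_on {0..t} u" unfolding u_def linear_flow_def by (intro continuous_intros)
    show "u 0 = 0" by (simp add: u_def sol0 linear_flow_0 zero_prod_def)
    fix s assume s: "0 < s" "s < t"
    have "(sol has_vector_derivative trunc_field a b M R (sol s)) (at s)"
      using s t by (intro has_vector_derivative_at_interior[OF sol_deriv]) auto
    moreover have "((\<lambda>s. \<epsilon> *\<^sub>R linear_flow a b k s) has_vector_derivative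
        linear_field a b (\<epsilon> *\<^sub>R linear_flow a b k s)) (at s)"
      using has_vector_derivative_scaleR[OF DERIV_const linear_flow_has_vector_derivative]
      by (simp add: linear_field_scaleR)
    ultimately show "(u has_vector_derivative
        trunc_field a b M R (sol s) - linear_field a b (\<epsilon> *\<^sub>R linear_flow a b k s)) (at s)"
      unfolding u_def by (intro derivative_intros)
    have "norm (\<epsilon> *\<^sub>R linear_flow a b k s) \<le> sqrt (1 + k\<^sup>2) * \<epsilon>"
      using norm_scaled_linear_flow_le[OF \<open>a < 0\<close>, of s \<epsilon> b k] s \<open>0 < \<epsilon>\<close> by simp
    also have "\<dots> \<le> R" using \<open>0 < \<epsilon>\<close> R(1) by simp
    finally have "norm (\<epsilon> *\<^sub>R linear_flow a b k s) \<le> R" .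
    then show "norm (trunc_field a b M R (sol s) - linear_field a b (\<epsilon> *\<^sub>R linear_flow a b k s))
        \<le> \<nu> * norm (u s) + \<eta> * R"
      unfolding \<nu>_def u_def using \<open>0 \<le> R\<close> R(2) \<open>0 \<le> \<eta>\<close> small
      by (intro trunc_field_near_linear_field)
  qed (use t \<open>0 \<le> \<nu>\<close> \<open>0 \<le> \<eta>\<close> \<open>0 \<le> R\<close> \<open>0 < \<epsilon>\<close> in auto)
  also have "\<dots> = \<epsilon>\<^sup>2 * (2 * \<eta> * K0 * t * exp ((2 * \<nu> + 2 * \<eta> * K0) * t))"
    using \<open>0 < \<epsilon>\<close> by (simp add: R K0_def power2_eq_square)
  also have "\<dots> \<le> \<epsilon>\<^sup>2 * (2 * \<eta> * K0 * tm * exp ((2 * \<nu> + 1) * tm))"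
    using h1 t \<open>0 \<le> \<nu>\<close> \<open>0 \<le> \<eta>\<close> \<open>1 \<le> K0\<close> unfolding K0_def[symmetric]
    by (intro mult_left_mono mult_mono exp_mono) auto
  also have "\<dots> \<le> (\<gamma> * \<epsilon>)\<^sup>2"
    using h2 by (simp add: K0_def \<nu>_def power_mult_distrib mult_left_mono mult.commute)
  finally have "(norm (u t))\<^sup>2 \<le> (\<gamma> * \<epsilon>)\<^sup>2" .
  then have "norm (u t) \<le> \<gamma> * \<epsilon>"
    by (rule power2_le_imp_le) (use \<open>0 \<le> \<gamma>\<close> \<open>0 < \<epsilon>\<close> in simp)
  then show ?thesis by (simp add: u_def)
qed

lemma snd_vfield_post_impact_neg:
  assumes "0 < \<epsilon>" "sqrt (1 + k\<^sup>2) * \<epsilon> \<le> r"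
    and small: "\<And>p. norm p \<le> r \<Longrightarrow> norm (M p) \<le> \<eta> * norm p"
    and "\<eta> * sqrt (1 + k\<^sup>2) < b * k - a"
  shows "snd (vfield a b M (- k * \<epsilon>, \<epsilon>)) < 0"
proof -
  have "norm (- k * \<epsilon>, \<epsilon>) = sqrt (\<epsilon>\<^sup>2 * (1 + k\<^sup>2))"
    by (simp add: norm_prod_def algebra_simps power2_eq_square)
  also have "\<dots> = sqrt (1 + k\<^sup>2) * \<epsilon>" using assms(1) by (simp add: real_sqrt_mult)
  finally have n: "norm (- k * \<epsilon>, \<epsilon>) = sqrt (1 + k\<^sup>2) * \<epsilon>" .
  have "\<bar>snd (M (- k * \<epsilon>, \<epsilon>))\<bar> \<le> norm (M (- k * \<epsilon>, \<epsilon>))"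
    using norm_snd_le[of "snd (M (- k * \<epsilon>, \<epsilon>))" "fst (M (- k * \<epsilon>, \<epsilon>))"] by simp
  also have "\<dots> \<le> \<eta> * (sqrt (1 + k\<^sup>2) * \<epsilon>)"
    using small[of "(- k * \<epsilon>, \<epsilon>)"] n assms(2) by simp
  also have "\<dots> < \<epsilon> * (b * k - a)" using assms(1,4) by (simp add: mult.commute mult.left_commute)
  finally show ?thesis by (simp add: vfield_def algebra_simps)
qed

section \<open>The impact cycle\<close>

text \<open>Leaving the post-impact point, it stays below the switching line until
  it first reaches it at time \<open>T\<close>, and is strictly above the line at the later time \<open>tm\<close>: this
  crossing is what forces nearby trajectories to impact.\<close>
locale impact_cycle =
  fixes a b k :: real and M :: "real \<times> real \<Rightarrow> real \<times> real" and \<epsilon> :: real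
    and F :: "real \<times> real \<Rightarrow> real \<times> real" and L \<rho> :: real
    and sol :: "real \<Rightarrow> real \<times> real" and T tm :: real
  assumes L: "0 < L" and rho: "0 < \<rho>" and T: "0 < T" "T < tm"
    and lip: "\<And>x y. dist (F x) (F y) \<le> L * dist x y"
    and sol0: "sol 0 = (- k * \<epsilon>, \<epsilon>)"
    and sol_deriv: "\<And>t. t \<in> {0..tm} \<Longrightarrow> (sol has_vector_derivative F (sol t)) (at t within {0..tm})"
    and agree: "\<And>t x. t \<in> {0..tm} \<Longrightarrow> dist x (sol t) < \<rho> \<Longrightarrow> vfield a b M x = F x"
    and below: "\<And>t. 0 < t \<Longrightarrow> t < T \<Longrightarrow> snd (sol t) < \<epsilon>"
    and hit: "snd (sol T) = \<epsilon>"
    and above: "\<epsilon> < snd (sol tm)"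
    and downward: "snd (vfield a b M (- k * \<epsilon>, \<epsilon>)) < 0"
begin

lemma F_sol: "t \<in> {0..tm} \<Longrightarrow> F (sol t) = vfield a b M (sol t)"
  using agree[of t "sol t"] rho by simp

lemma sol_continuous: "continuous_on {0..tm} sol"
  by (rule continuous_on_vector_derivative[OF sol_deriv])

lemma sol_has_vector_derivative_at:
  "0 < t \<Longrightarrow> t < tm \<Longrightarrow> (sol has_vector_derivative F (sol t)) (at t)"
  by (rule has_vector_derivative_at_interior[OF sol_deriv]) auto

lemma sol_tendsto_left: "(sol \<longlongrightarrow> sol T) (at_left T)"
proof -
  have "isCont sol T" by (rule has_vector_derivative_continuous[OF sol_has_vector_derivative_at[OF T]])
  then show ?thesis unfolding isCont_def by (rule tendsto_within_subset) simp
qed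

definition cycle :: "real \<Rightarrow> real \<times> real" where
  "cycle t = sol (t - T * of_int \<lfloor>t / T\<rfloor>)"

lemma cycle_decompose:
  obtains n :: int and r where "t = T * of_int n + r" "0 \<le> r" "r < T" "cycle t = sol r"
proof -
  have "0 \<le> t - T * of_int \<lfloor>t / T\<rfloor>" "t - T * of_int \<lfloor>t / T\<rfloor> < T"
    using floor_divide_lower[OF T(1), of t] floor_divide_upper[OF T(1), of t]
    by (auto simp: algebra_simps)
  then show ?thesis using that[of "\<lfloor>t / T\<rfloor>" "t - T * of_int \<lfloor>t / T\<rfloor>"] by (simp add: cycle_def)
qed

lemma cycle_eq:
  assumes "T * of_int n \<le> t" "t < T * (of_int n + 1)"
  shows "cycle t = sol (t - T * of_int n)"
proof -
  have "\<lfloor>t / T\<rfloor> = n" using T assms by (intro floor_unique) (auto simp: field_simps)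
  then show ?thesis by (simp add: cycle_def)
qed

lemma cycle_shift: "cycle (t + T * of_int m) = cycle t"
proof -
  have "\<lfloor>(t + T * of_int m) / T\<rfloor> = \<lfloor>t / T\<rfloor> + m"
    using T by (simp add: add_divide_distrib)
  then show ?thesis unfolding cycle_def by (simp add: algebra_simps)
qed

lemma cycle_at_multiple: "cycle (T * of_int m) = (- k * \<epsilon>, \<epsilon>)"
proof -
  have "cycle 0 = (- k * \<epsilon>, \<epsilon>)" using sol0 by (simp add: cycle_def)
  then show ?thesis using cycle_shift[of 0 m] by simp
qed

lemma snd_cycle_le: "snd (cycle t) \<le> \<epsilon>"
proof -
  obtain n r where "0 \<le> r" "r < T" "cycle t = sol r" by (rule cycle_decompose)
  then show ?thesis using below[of r] sol0 by (cases "r = 0") auto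
qed

lemma cycle_has_right_derivative:
  "(cycle has_vector_derivative vfield a b M (cycle t)) (at t within {t..})"
proof -
  obtain n r where nr: "t = T * of_int n + r" "0 \<le> r" "r < T" "cycle t = sol r"
    by (rule cycle_decompose)
  define S where "S = {t..<T * (of_int n + 1)}"
  have tS: "t \<in> S" using nr by (auto simp: S_def algebra_simps)
  have r: "r \<in> {0..tm}" and img: "(\<lambda>s. s - T * of_int n) ` S \<subseteq> {0..tm}"
    using nr T by (auto simp: S_def algebra_simps)
  have "(sol has_vector_derivative F (sol r)) (at r within (\<lambda>s. s - T * of_int n) ` S)"
    by (rule has_vector_derivative_within_subset[OF sol_deriv[OF r] img])
  then have "((\<lambda>s. sol (s - T * of_int n)) has_vector_derivative F (sol r)) (at t within S)"
    using nr(1) by (intro has_vector_derivative_shift_within) simp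
  then have "(cycle has_vector_derivative F (sol r)) (at t within S)"
    by (rule has_vector_derivative_transform[OF tS, rotated])
      (use nr in \<open>auto simp: S_def algebra_simps intro!: cycle_eq\<close>)
  moreover have "at t within S = at t within {t..}"
    by (rule at_within_nhd[of _ "{..<T * (of_int n + 1)}"]) (use tS in \<open>auto simp: S_def\<close>)
  ultimately show ?thesis using nr T F_sol[of r] by simp
qed

lemma cycle_has_vector_derivative_at:
  assumes "\<And>m::int. t \<noteq> T * of_int m"
  shows "(cycle has_vector_derivative vfield a b M (cycle t)) (at t)"
proof -
  obtain n r where nr: "t = T * of_int n + r" "0 \<le> r" "r < T" "cycle t = sol r"
    by (rule cycle_decompose)
  have "0 < r" using nr assms[of n] by auto
  define S where "S = {T * of_int n<..<T * (of_int n + 1)}"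
  have tS: "t \<in> S" using nr \<open>0 < r\<close> by (auto simp: S_def algebra_simps)
  have "(sol has_vector_derivative F (sol r)) (at r)"
    using nr \<open>0 < r\<close> T by (intro sol_has_vector_derivative_at) auto
  then have "((\<lambda>s. sol (s - T * of_int n)) has_vector_derivative F (sol r)) (at t)"
    using nr(1) by (intro has_vector_derivative_shift_at) simp
  then have "(cycle has_vector_derivative F (sol r)) (at t)"
    by (rule has_vector_derivative_transform_within_open[OF _ _ tS])
      (auto simp: S_def algebra_simps intro!: cycle_eq[symmetric])
  then show ?thesis using nr T F_sol[of r] by simp
qed

lemma cycle_tendsto_left: "(cycle \<longlongrightarrow> sol T) (at_left (T * of_int m))"
proof -
  have "sol (s - T * (of_int m - 1)) = cycle s" if "s \<in> {T * (of_int m - 1)<..<T * of_int m}" for s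
    using cycle_eq[of "m - 1" s] that by simp
  then have "\<forall>\<^sub>F s in at_left (T * of_int m). sol (s - T * (of_int m - 1)) = cycle s"
    using T by (intro eventually_at_leftI[of "T * (of_int m - 1)"]) (auto simp: algebra_simps)
  moreover have "filterlim (\<lambda>s. s - T * (of_int m - 1)) (at_left T) (at_left (T * of_int m))"
  proof (rule tendsto_imp_filterlim_at_left)
    have "((\<lambda>s. s - T * (of_int m - 1)) \<longlongrightarrow> T * of_int m - T * (of_int m - 1))
        (at_left (T * of_int m))"
      by (intro tendsto_intros)
    then show "((\<lambda>s. s - T * (of_int m - 1)) \<longlongrightarrow> T) (at_left (T * of_int m))"
      by (simp add: algebra_simps)
    show "\<forall>\<^sub>F s in at_left (T * of_int m). s - T * (of_int m - 1) < T"
      using eventually_at_left_real[of "T * of_int m - 1" "T * of_int m"]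
      by (auto elim: eventually_mono simp: algebra_simps)
  qed
  then have "((\<lambda>s. sol (s - T * (of_int m - 1))) \<longlongrightarrow> sol T) (at_left (T * of_int m))"
    by (rule filterlim_compose[OF sol_tendsto_left])
  ultimately show ?thesis by (rule tendsto_cong[THEN iffD1])
qed

lemma impact_times_cycle: "t \<in> impact_times \<epsilon> cycle \<longleftrightarrow> 0 < t \<and> (\<exists>m::int. t = T * of_int m)"
proof
  assume "0 < t \<and> (\<exists>m::int. t = T * of_int m)"
  moreover have "sol T = (fst (sol T), \<epsilon>)" using hit by (metis prod.collapse)
  ultimately show "t \<in> impact_times \<epsilon> cycle"
    unfolding impact_times_def using cycle_tendsto_left by (auto) (metis)
next
  assume "t \<in> impact_times \<epsilon> cycle"
  then obtain x where "0 < t" and lim: "(cycle \<longlongrightarrow> (x, \<epsilon>)) (at_left t)"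
    unfolding impact_times_def by blast
  show "0 < t \<and> (\<exists>m::int. t = T * of_int m)"
  proof (rule ccontr)
    assume not_multiple: "\<not> (0 < t \<and> (\<exists>m::int. t = T * of_int m))"
    then have "isCont cycle t"
      using \<open>0 < t\<close> cycle_has_vector_derivative_at has_vector_derivative_continuous by blast
    then have "(cycle \<longlongrightarrow> cycle t) (at_left t)"
      unfolding isCont_def by (rule tendsto_within_subset) simp
    with lim have "snd (cycle t) = \<epsilon>"
      using tendsto_unique[OF trivial_limit_at_left_real] by fastforce
    moreover obtain n r where "t = T * of_int n + r" "0 \<le> r" "r < T" "cycle t = sol r"
      by (rule cycle_decompose)
    ultimately show False using below[of r] not_multiple \<open>0 < t\<close> by (cases "r = 0") auto
  qed
qed

lemma impact_times_cycle_Ioc: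
  assumes "0 \<le> s"
  shows "impact_times \<epsilon> cycle \<inter> {s<..s + T} = {T * of_int (\<lfloor>s / T\<rfloor> + 1)}"
proof -
  define n where "n = \<lfloor>s / T\<rfloor>"
  have n: "T * of_int n \<le> s" "s < T * of_int (n + 1)"
    using floor_divide_lower[OF T(1), of s] floor_divide_upper[OF T(1), of s]
    by (auto simp: n_def algebra_simps)
  have unique: "m = n + 1" if "s < T * of_int m" "T * of_int m \<le> s + T" for m :: int
  proof -
    have "T * of_int (n + 2) = T * of_int (n + 1) + T" by (simp add: algebra_simps)
    then have "T * of_int n < T * of_int m" "T * of_int m < T * of_int (n + 2)"
      using that n by linarith+
    then have "n < m" "m < n + 2" using T by (simp_all add: mult_less_cancel_left_pos)
    then show ?thesis by linarith
  qed
  show ?thesis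
  proof (intro equalityI subsetI)
    fix t assume "t \<in> impact_times \<epsilon> cycle \<inter> {s<..s + T}"
    then obtain m :: int where "t = T * of_int m" "s < t" "t \<le> s + T"
      by (auto simp: impact_times_cycle)
    then show "t \<in> {T * of_int (\<lfloor>s / T\<rfloor> + 1)}" using unique[of m] by (simp add: n_def)
  next
    fix t assume "t \<in> {T * of_int (\<lfloor>s / T\<rfloor> + 1)}"
    then have "t = T * of_int (n + 1)" by (simp add: n_def)
    moreover have "s < T * of_int (n + 1)" "T * of_int (n + 1) \<le> s + T"
      using n by (auto simp: algebra_simps)
    moreover have "t \<in> impact_times \<epsilon> cycle"
      unfolding impact_times_cycle using calculation assms by (intro conjI exI[of _ "n + 1"]) auto
    ultimately show "t \<in> impact_times \<epsilon> cycle \<inter> {s<..s + T}" by simp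
  qed
qed

theorem cycle_periodic_one_impact: "periodic_one_impact a b k M \<epsilon> cycle T"
  unfolding periodic_one_impact_def
proof (intro conjI allI impI)
  show "impact_traj a b k M \<epsilon> (cycle 0) cycle"
    unfolding impact_traj_def
  proof (intro conjI allI impI)
    show "snd (cycle 0) \<le> \<epsilon>" "cycle 0 = (if snd (cycle 0) = \<epsilon> then (- k * \<epsilon>, \<epsilon>) else cycle 0)"
      using cycle_at_multiple[of 0] by auto
    show "snd (cycle t) \<le> \<epsilon>" for t by (rule snd_cycle_le)
    show "(cycle has_vector_derivative vfield a b M (cycle t)) (at t within {t..})" for t
      by (rule cycle_has_right_derivative)
    fix t :: real assume "0 < t"
    show "if t \<in> impact_times \<epsilon> cycle then cycle t = (- k * \<epsilon>, \<epsilon>)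
          else (cycle has_vector_derivative vfield a b M (cycle t)) (at t)"
    proof (cases "t \<in> impact_times \<epsilon> cycle")
      case True
      then obtain m :: int where "t = T * of_int m" by (auto simp: impact_times_cycle)
      then show ?thesis using True cycle_at_multiple by simp
    next
      case False
      then have "t \<noteq> T * of_int m" for m :: int using \<open>0 < t\<close> by (auto simp: impact_times_cycle)
      then show ?thesis using False cycle_has_vector_derivative_at by simp
    qed
  qed
  show "0 < T" by (rule T)
  show "cycle (t + T) = cycle t" for t using cycle_shift[of t 1] by simp
  show "card (impact_times \<epsilon> cycle \<inter> {s<..s + T}) = 1" if "0 \<le> s" for s
    using impact_times_cycle_Ioc[OF that] by simp
qed

definition impact_at :: "(real \<Rightarrow> real \<times> real) \<Rightarrow> real \<Rightarrow> bool" where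
  "impact_at w s \<longleftrightarrow> (\<exists>x. (w \<longlongrightarrow> (x, \<epsilon>)) (at_left s))"

definition traj_from :: "(real \<Rightarrow> real \<times> real) \<Rightarrow> real \<Rightarrow> bool" where
  "traj_from w t0 \<longleftrightarrow> (\<forall>t\<ge>t0. snd (w t) \<le> \<epsilon>) \<and>
     (\<forall>t\<ge>t0. (w has_vector_derivative vfield a b M (w t)) (at t within {t..})) \<and>
     (\<forall>t>t0. if impact_at w t then w t = (- k * \<epsilon>, \<epsilon>)
            else (w has_vector_derivative vfield a b M (w t)) (at t))"

lemma impact_traj_imp_traj_from: "impact_traj a b k M \<epsilon> p w \<Longrightarrow> traj_from w 0"
  unfolding impact_traj_def traj_from_def impact_at_def impact_times_def by auto

lemma traj_from_mono: "traj_from w t0 \<Longrightarrow> t0 \<le> t1 \<Longrightarrow> traj_from w t1"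
  unfolding traj_from_def by auto

lemma traj_from_impact: "traj_from w t0 \<Longrightarrow> t0 < t \<Longrightarrow> impact_at w t \<Longrightarrow> w t = (- k * \<epsilon>, \<epsilon>)"
  unfolding traj_from_def by auto

lemma traj_from_no_impact:
  "traj_from w t0 \<Longrightarrow> t0 < t \<Longrightarrow> \<not> impact_at w t
    \<Longrightarrow> (w has_vector_derivative vfield a b M (w t)) (at t)"
  unfolding traj_from_def by auto

lemma traj_from_right_derivative:
  "traj_from w t0 \<Longrightarrow> t0 \<le> t \<Longrightarrow> (w has_vector_derivative vfield a b M (w t)) (at t within {t..})"
  unfolding traj_from_def by auto

lemma traj_continuous_on:
  assumes "traj_from w t0" "t0 \<le> s0" and "\<And>s. s0 < s \<Longrightarrow> s \<le> s1 \<Longrightarrow> \<not> impact_at w s"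
  shows "continuous_on {s0..s1} w"
proof (rule continuous_on_Icc_from_right_derivative[OF traj_from_right_derivative[OF assms(1,2)]])
  fix t assume "s0 < t" "t \<le> s1"
  then have "(w has_vector_derivative vfield a b M (w t)) (at t)"
    by (intro traj_from_no_impact[OF assms(1)] assms(3)) (use assms(2) in auto)
  then show "isCont w t" by (rule has_vector_derivative_continuous)
qed

lemma traj_dist_sol_le:
  assumes "s0 \<le> s1" "0 \<le> \<tau>" "\<tau> + (s1 - s0) \<le> tm"
    and "continuous_on {s0..s1} w"
    and "\<And>t. s0 < t \<Longrightarrow> t < s1 \<Longrightarrow> (w has_vector_derivative vfield a b M (w t)) (at t)"
    and "dist (w s0) (sol \<tau>) \<le> \<delta>" and "\<delta> * exp (L * (s1 - s0)) < \<rho>"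
  shows "\<forall>t\<in>{s0..s1}. dist (w t) (sol (t - (s0 - \<tau>))) \<le> \<delta> * exp (L * (t - s0))"
proof (rule lipschitz_ode_dist_exp_bound_in_tube[OF assms(1,4) _ assms(5) _ lip _ _ _ assms(7)])
  show "continuous_on {s0..s1} (\<lambda>t. sol (t - (s0 - \<tau>)))"
    by (rule continuous_on_compose2[OF sol_continuous])
      (use assms(2,3) in \<open>auto intro!: continuous_intros\<close>)
  show "((\<lambda>t. sol (t - (s0 - \<tau>))) has_vector_derivative F (sol (t - (s0 - \<tau>)))) (at t)"
    if "s0 < t" "t < s1" for t
    using that assms(2,3) by (intro has_vector_derivative_shift_at sol_has_vector_derivative_at) auto
  show "vfield a b M x = F x" if "t \<in> {s0..s1}" "dist x (sol (t - (s0 - \<tau>))) < \<rho>" for t x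
    using that assms(2,3) by (intro agree[of "t - (s0 - \<tau>)"]) auto
qed (use L assms(6) in auto)

lemma sol_shift_tendsto_left:
  assumes "0 < s1 - s0" "s1 - s0 < tm" "\<forall>t\<in>{s0..<s1}. w t = sol (t - s0)"
  shows "(w \<longlongrightarrow> sol (s1 - s0)) (at_left s1)"
proof -
  have "(sol has_vector_derivative F (sol (s1 - s0))) (at (s1 - s0))"
    using assms by (intro sol_has_vector_derivative_at) auto
  then have "isCont (\<lambda>t. sol (t - s0)) s1"
    by (intro has_vector_derivative_continuous has_vector_derivative_shift_at)
  then have "((\<lambda>t. sol (t - s0)) \<longlongrightarrow> sol (s1 - s0)) (at_left s1)"
    unfolding isCont_def by (rule tendsto_within_subset) simp
  moreover have "\<forall>\<^sub>F t in at_left s1. sol (t - s0) = w t"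
    using eventually_at_left_real[of s0 s1] assms(1,3) by (auto elim: eventually_mono)
  ultimately show ?thesis by (simp add: tendsto_cong)
qed

lemma traj_eq_sol_shift:
  assumes traj: "traj_from w t0" and "t0 \<le> s0" "w s0 = (- k * \<epsilon>, \<epsilon>)" "s0 \<le> s1" "s1 - s0 \<le> tm"
    and no_impact: "\<And>s. s0 < s \<Longrightarrow> s < s1 \<Longrightarrow> \<not> impact_at w s"
  shows "\<forall>t\<in>{s0..<s1}. w t = sol (t - s0)"
proof
  fix t assume t: "t \<in> {s0..<s1}"
  have "continuous_on {s0..t} w"
    using t by (intro traj_continuous_on[OF traj \<open>t0 \<le> s0\<close>] no_impact) auto
  moreover have "(w has_vector_derivative vfield a b M (w u)) (at u)" if "s0 < u" "u < t" for u
    by (rule traj_from_no_impact[OF traj]) (use that t \<open>t0 \<le> s0\<close> no_impact in auto)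
  ultimately have "\<forall>u\<in>{s0..t}. dist (w u) (sol (u - (s0 - 0))) \<le> 0 * exp (L * (u - s0))"
    using t assms(2-5) sol0 rho by (intro traj_dist_sol_le) auto
  then show "w t = sol (t - s0)" using t by auto
qed

lemma traj_leaves_line_after_impact:
  assumes traj: "traj_from w t0" and "t0 \<le> s0" "w s0 = (- k * \<epsilon>, \<epsilon>)"
  obtains d where "0 < d" "\<And>s. s0 < s \<Longrightarrow> s < s0 + d \<Longrightarrow> \<not> impact_at w s"
proof -
  have "((\<lambda>t. snd (w t)) has_real_derivative snd (vfield a b M (w s0))) (at s0 within {s0..})"
    using traj_from_right_derivative[OF traj \<open>t0 \<le> s0\<close>] by (rule has_vector_derivative_snd)
  from has_real_derivative_neg_dec_right[OF this] downward assms(3)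
  obtain d where "0 < d" and d: "\<And>h. 0 < h \<Longrightarrow> h < d \<Longrightarrow> snd (w (s0 + h)) < \<epsilon>"
    by auto
  show ?thesis
  proof (rule that[OF \<open>0 < d\<close>])
    fix s assume "s0 < s" "s < s0 + d"
    then show "\<not> impact_at w s"
      using d[of "s - s0"] traj_from_impact[OF traj, of s] \<open>t0 \<le> s0\<close> by auto
  qed
qed

lemma traj_no_impact_near:
  assumes traj: "traj_from w t0" and "t0 < s1" "\<not> impact_at w s1" "w s1 \<noteq> (- k * \<epsilon>, \<epsilon>)"
  obtains e where "0 < e" "\<And>s. s1 < s \<Longrightarrow> s < s1 + e \<Longrightarrow> \<not> impact_at w s"
proof -
  have "isCont w s1"
    using traj_from_no_impact[OF traj assms(2,3)] by (rule has_vector_derivative_continuous)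
  moreover have "0 < dist (- k * \<epsilon>, \<epsilon>) (w s1)" using assms(4) by simp
  ultimately obtain e where "0 < e"
    and e: "\<And>s. dist s s1 < e \<Longrightarrow> dist (w s) (w s1) < dist (- k * \<epsilon>, \<epsilon>) (w s1)"
    unfolding continuous_at_eps_delta by blast
  show ?thesis
  proof (rule that[OF \<open>0 < e\<close>])
    fix s assume s: "s1 < s" "s < s1 + e"
    show "\<not> impact_at w s"
    proof
      assume "impact_at w s"
      then have "w s = (- k * \<epsilon>, \<epsilon>)" using traj_from_impact[OF traj] s assms(2) by simp
      then show False using e[of s] s by (simp add: dist_real_def)
    qed
  qed
qed

text \<open>If a trajectory follows \<open>sol\<close> from an impact at \<open>s0\<close> up to \<open>s1 < s0 + T\<close>, it is below the
  switching line at \<open>s1\<close>, hence continuous there and away from the post-impact point; so no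
  impacts occur shortly after \<open>s1\<close> either.\<close>
lemma traj_no_impact_beyond:
  assumes traj: "traj_from w t0" and s0: "t0 \<le> s0" and ws0: "w s0 = (- k * \<epsilon>, \<epsilon>)"
    and "s0 < s1" "s1 < s0 + T" and no_impact: "\<And>s. s0 < s \<Longrightarrow> s < s1 \<Longrightarrow> \<not> impact_at w s"
  obtains e where "0 < e" "\<And>s. s0 < s \<Longrightarrow> s < s1 + e \<Longrightarrow> \<not> impact_at w s"
proof -
  have "\<forall>t\<in>{s0..<s1}. w t = sol (t - s0)"
    using assms(4,5) T by (intro traj_eq_sol_shift[OF traj s0 ws0] no_impact) auto
  then have lim: "(w \<longlongrightarrow> sol (s1 - s0)) (at_left s1)"
    using assms(4,5) T by (intro sol_shift_tendsto_left) auto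
  have below_s1: "snd (sol (s1 - s0)) < \<epsilon>" using below assms(4,5) by auto
  have no_impact_s1: "\<not> impact_at w s1"
    unfolding impact_at_def
    using tendsto_unique[OF trivial_limit_at_left_real lim] below_s1 by force
  have "t0 < s1" using s0 assms(4) by linarith
  have "isCont w s1"
    by (rule has_vector_derivative_continuous[OF traj_from_no_impact[OF traj \<open>t0 < s1\<close> no_impact_s1]])
  then have "(w \<longlongrightarrow> w s1) (at_left s1)"
    unfolding isCont_def by (rule tendsto_within_subset) simp
  with lim have "w s1 = sol (s1 - s0)" by (rule tendsto_unique[OF trivial_limit_at_left_real, symmetric])
  then have "w s1 \<noteq> (- k * \<epsilon>, \<epsilon>)" using below_s1 by auto
  then obtain e where "0 < e" and e: "\<And>s. s1 < s \<Longrightarrow> s < s1 + e \<Longrightarrow> \<not> impact_at w s"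
    using traj_no_impact_near[OF traj \<open>t0 < s1\<close> no_impact_s1] by blast
  show ?thesis
  proof (rule that[OF \<open>0 < e\<close>])
    fix s assume "s0 < s" "s < s1 + e"
    then show "\<not> impact_at w s" using no_impact no_impact_s1 e by (cases s s1 rule: linorder_cases) auto
  qed
qed

lemma traj_no_impact_within_period:
  assumes traj: "traj_from w t0" and s0: "t0 \<le> s0" and ws0: "w s0 = (- k * \<epsilon>, \<epsilon>)"
    and "s0 < s" "s < s0 + T"
  shows "\<not> impact_at w s"
proof
  assume "impact_at w s"
  define J where "J = {s. s0 < s \<and> s < s0 + T \<and> impact_at w s}"
  have "s \<in> J" using \<open>impact_at w s\<close> assms(4,5) by (simp add: J_def)
  have bdd: "bdd_below J" by (rule bdd_belowI[of _ s0]) (simp add: J_def)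
  obtain d where "0 < d" and d: "\<And>s. s0 < s \<Longrightarrow> s < s0 + d \<Longrightarrow> \<not> impact_at w s"
    using traj_leaves_line_after_impact[OF traj s0 ws0] by blast
  have "s0 + d \<le> Inf J"
  proof (rule cInf_greatest)
    show "J \<noteq> {}" using \<open>s \<in> J\<close> by blast
    show "s0 + d \<le> s'" if "s' \<in> J" for s'
      using that d[of s'] by (force simp: J_def)
  qed
  moreover have "Inf J < s0 + T" using cInf_lower[OF \<open>s \<in> J\<close> bdd] assms(5) by simp
  moreover have no_impact: "\<not> impact_at w s'" if "s0 < s'" "s' < Inf J" for s'
    using cInf_lower[OF _ bdd, of s'] that \<open>Inf J < s0 + T\<close> by (force simp: J_def)
  moreover have "s0 < Inf J" using \<open>s0 + d \<le> Inf J\<close> \<open>0 < d\<close> by linarith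
  ultimately obtain e where "0 < e" and e: "\<And>s'. s0 < s' \<Longrightarrow> s' < Inf J + e \<Longrightarrow> \<not> impact_at w s'"
    using traj_no_impact_beyond[OF traj s0 ws0, of "Inf J"] by blast
  have "Inf J + e \<le> s'" if "s' \<in> J" for s'
  proof (rule ccontr)
    assume "\<not> Inf J + e \<le> s'"
    then show False using e[of s'] that by (simp add: J_def)
  qed
  then have "Inf J + e \<le> Inf J" using \<open>s \<in> J\<close> by (intro cInf_greatest) auto
  then show False using \<open>0 < e\<close> by simp
qed

text \<open>Between two consecutive impacts a trajectory follows \<open>sol\<close>, so the next impact after \<open>s0\<close>
  happens at \<open>s0 + T\<close>.\<close>
lemma traj_one_period:
  assumes traj: "traj_from w t0" and s0: "t0 \<le> s0" and ws0: "w s0 = (- k * \<epsilon>, \<epsilon>)"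
  shows "(\<forall>r\<in>{0..<T}. w (s0 + r) = sol r) \<and> w (s0 + T) = (- k * \<epsilon>, \<epsilon>)"
proof -
  have agree_T: "\<forall>t\<in>{s0..<s0 + T}. w t = sol (t - s0)"
    using T traj_no_impact_within_period[OF traj s0 ws0]
    by (intro traj_eq_sol_shift[OF traj s0 ws0]) auto
  then have "(w \<longlongrightarrow> sol T) (at_left (s0 + T))"
    using sol_shift_tendsto_left[of "s0 + T" s0 w] T by simp
  moreover have "sol T = (fst (sol T), \<epsilon>)" using hit by (metis prod.collapse)
  ultimately have "impact_at w (s0 + T)" unfolding impact_at_def by metis
  then have "w (s0 + T) = (- k * \<epsilon>, \<epsilon>)"
    using traj_from_impact[OF traj] s0 T by simp
  with agree_T show ?thesis by auto
qed

lemma traj_eq_cycle_after_impact: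
  assumes traj: "traj_from w t0" and wt0: "w t0 = (- k * \<epsilon>, \<epsilon>)" and "0 \<le> t"
  shows "w (t0 + t) = cycle t"
proof -
  have periods: "w (t0 + T * real n) = (- k * \<epsilon>, \<epsilon>)
      \<and> (\<forall>r\<in>{0..<T}. w (t0 + T * real n + r) = sol r)" for n :: nat
  proof (induction n)
    case 0
    show ?case using traj_one_period[OF traj _ wt0] wt0 by simp
  next
    case (Suc n)
    have "t0 + T * real (Suc n) = t0 + T * real n + T" by (simp add: algebra_simps)
    moreover have "t0 \<le> t0 + T * real n" using T by simp
    ultimately have "w (t0 + T * real (Suc n)) = (- k * \<epsilon>, \<epsilon>)"
      using traj_one_period[OF traj _ Suc.IH[THEN conjunct1]] by (simp add: add.assoc)
    moreover have "t0 \<le> t0 + T * real (Suc n)" using T by simp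
    ultimately show ?case using traj_one_period[OF traj] by blast
  qed
  obtain n r where nr: "t = T * of_int n + r" "0 \<le> r" "r < T" "cycle t = sol r"
    by (rule cycle_decompose)
  have "T * (- 1) < T * of_int n" using nr \<open>0 \<le> t\<close> by simp
  then have "- 1 < (of_int n :: real)" by (simp only: mult_less_cancel_left_pos[OF T(1)])
  then have "0 \<le> n" by simp
  then have "real (nat n) = of_int n" by simp
  moreover have "w (t0 + T * real (nat n) + r) = sol r" using periods[of "nat n"] nr(2,3) by auto
  ultimately show ?thesis using nr(1,4) by (simp add: add.assoc)
qed

text \<open>A trajectory starting close to the cycle, if it never impacted, would follow \<open>sol\<close> past
  time \<open>tm\<close> (Gronwall) and so cross the switching line.\<close>
lemma traj_near_cycle_impacts:
  assumes traj: "traj_from w 0" and "dist (w 0) (sol \<tau>) \<le> \<delta>" "0 \<le> \<tau>" "\<tau> < T"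
    and small: "\<delta> * exp (L * tm) < min \<rho> (snd (sol tm) - \<epsilon>)"
  shows "\<exists>t1>0. impact_at w t1"
proof (rule ccontr)
  assume "\<not> (\<exists>t1>0. impact_at w t1)"
  then have no_impact: "\<not> impact_at w t" if "0 < t" for t using that by blast
  have "0 \<le> \<delta>" using assms(2) zero_le_dist order_trans by blast
  have exp_le: "\<delta> * exp (L * (tm - \<tau>)) \<le> \<delta> * exp (L * tm)"
    using \<open>0 \<le> \<delta>\<close> L \<open>0 \<le> \<tau>\<close> by (intro mult_left_mono) auto
  have "\<forall>t\<in>{0..tm - \<tau>}. dist (w t) (sol (t - (0 - \<tau>))) \<le> \<delta> * exp (L * (t - 0))"
  proof (rule traj_dist_sol_le)
    show "continuous_on {0..tm - \<tau>} w"
      using no_impact by (intro traj_continuous_on[OF traj]) auto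
  qed (use assms T no_impact exp_le in \<open>auto intro: traj_from_no_impact[OF traj]\<close>)
  then have "dist (w (tm - \<tau>)) (sol tm) \<le> \<delta> * exp (L * (tm - \<tau>))"
    using assms(3,4) T by (drule_tac bspec[of _ _ "tm - \<tau>"]) auto
  then have "dist (w (tm - \<tau>)) (sol tm) < snd (sol tm) - \<epsilon>" using exp_le small by linarith
  moreover have "\<bar>snd (w (tm - \<tau>)) - snd (sol tm)\<bar> \<le> dist (w (tm - \<tau>)) (sol tm)"
    by (metis dist_real_def dist_snd_le)
  moreover have "snd (w (tm - \<tau>)) \<le> \<epsilon>"
    using traj assms(4) T unfolding traj_from_def by auto
  ultimately show False by linarith
qed

lemma traj_eq_cycle_shift_after_impact:
  assumes traj: "traj_from w t1" and "w t1 = (- k * \<epsilon>, \<epsilon>)"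
  obtains s where "0 \<le> s" "\<And>t. t1 \<le> t \<Longrightarrow> w t = cycle (t + s)"
proof
  show "0 \<le> T * of_int \<lceil>t1 / T\<rceil> - t1"
    using ceiling_divide_upper[OF T(1), of t1] by (simp add: mult.commute)
  fix t assume "t1 \<le> t"
  have "w t = cycle (t - t1)"
    using traj_eq_cycle_after_impact[OF assms, of "t - t1"] \<open>t1 \<le> t\<close> by simp
  also have "\<dots> = cycle (t - t1 + T * of_int \<lceil>t1 / T\<rceil>)" by (rule cycle_shift[symmetric])
  finally show "w t = cycle (t + (T * of_int \<lceil>t1 / T\<rceil> - t1))" by (simp add: algebra_simps)
qed

lemma traj_near_cycle_reaches_post_impact:
  assumes w: "impact_traj a b k M \<epsilon> p w" and near: "infdist p (cycle ` {0..}) < \<delta>"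
    and small: "\<delta> * exp (L * tm) < min \<rho> (snd (sol tm) - \<epsilon>)"
  obtains t1 where "0 \<le> t1" "w t1 = (- k * \<epsilon>, \<epsilon>)"
proof (cases "snd p = \<epsilon>")
  case True
  then show ?thesis using w that[of 0] by (simp add: impact_traj_def)
next
  case False
  then have "w 0 = p" using w by (simp add: impact_traj_def)
  have traj: "traj_from w 0" by (rule impact_traj_imp_traj_from[OF w])
  have "cycle ` {0..} \<noteq> {}" by auto
  then obtain q where "q \<in> cycle ` {0..}" "dist p q < \<delta>"
    using near unfolding infdist_notempty[OF \<open>cycle ` {0..} \<noteq> {}\<close>]
    by (metis cINF_less_iff bdd_belowI2 zero_le_dist)
  then obtain t' where "dist p (cycle t') < \<delta>" by blast
  moreover obtain n \<tau> where "0 \<le> \<tau>" "\<tau> < T" "cycle t' = sol \<tau>"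
    by (rule cycle_decompose)
  ultimately have "dist (w 0) (sol \<tau>) \<le> \<delta>" using \<open>w 0 = p\<close> by simp
  then obtain t1 where "0 < t1" "impact_at w t1"
    using traj_near_cycle_impacts[OF traj _ \<open>0 \<le> \<tau>\<close> \<open>\<tau> < T\<close> small] by blast
  then show ?thesis using traj_from_impact[OF traj] that[of t1] by simp
qed

theorem cycle_finite_time_stable: "finite_time_stable a b k M \<epsilon> cycle"
proof -
  define g where "g = min \<rho> (snd (sol tm) - \<epsilon>)"
  define \<delta> where "\<delta> = g * exp (- L * tm) / 2"
  have "0 < g" using above rho by (simp add: g_def)
  then have "0 < \<delta>" by (simp add: \<delta>_def)
  have "\<delta> * exp (L * tm) = g / 2" by (simp add: \<delta>_def exp_minus field_simps)
  with \<open>0 < g\<close> have "\<delta> * exp (L * tm) < g" by linarith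
  then have small: "\<delta> * exp (L * tm) < min \<rho> (snd (sol tm) - \<epsilon>)" by (simp add: g_def)
  show ?thesis unfolding finite_time_stable_def
  proof (rule exI[of _ \<delta>], intro conjI \<open>0 < \<delta>\<close> allI impI)
    fix p w assume "infdist p (cycle ` {0..}) < \<delta>" and w: "impact_traj a b k M \<epsilon> p w"
    then obtain t1 where "0 \<le> t1" "w t1 = (- k * \<epsilon>, \<epsilon>)"
      using traj_near_cycle_reaches_post_impact[OF w _ small] by blast
    moreover have "traj_from w t1"
      using traj_from_mono[OF impact_traj_imp_traj_from[OF w] \<open>0 \<le> t1\<close>] .
    ultimately show "\<exists>t1\<ge>0. \<exists>s\<ge>0. \<forall>t\<ge>t1. w t = cycle (t + s)"
      using traj_eq_cycle_shift_after_impact by metis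
  qed
qed

end

section \<open>Construction for small \<open>\<epsilon>\<close>\<close>

lemma impact_cycle_of_tracking_solution:
  fixes a b k \<epsilon> :: real and M F :: "real \<times> real \<Rightarrow> real \<times> real" and sol :: "real \<Rightarrow> real \<times> real"
  defines "K0 \<equiv> sqrt (1 + k\<^sup>2)"
  assumes "a < 0" "0 < \<epsilon>" "0 < tm"
    and lipF: "\<And>x y. dist (F x) (F y) \<le> L * dist x y" and "0 < L"
    and F_eq: "\<And>x. norm x \<le> 2 * K0 * \<epsilon> \<Longrightarrow> F x = vfield a b M x"
    and sol0: "sol 0 = (- k * \<epsilon>, \<epsilon>)"
    and sol_deriv: "\<And>t. t \<in> {0..tm} \<Longrightarrow> (sol has_vector_derivative F (sol t)) (at t within {0..tm})"
    and near: "\<And>t. t \<in> {0..tm} \<Longrightarrow> norm (sol t - \<epsilon> *\<^sub>R linear_flow a b k t) \<le> \<gamma> * \<epsilon>"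
    and "\<gamma> \<le> 1/2" "\<gamma> < snd (linear_flow a b k tm) - 1"
    and downward: "snd (vfield a b M (- k * \<epsilon>, \<epsilon>)) < 0"
  shows "\<exists>z T. periodic_one_impact a b k M \<epsilon> z T \<and> finite_time_stable a b k M \<epsilon> z \<and>
           (\<forall>t. norm (z t) \<le> 2 * K0 * \<epsilon>)"
proof -
  have "0 < K0 * \<epsilon>" using \<open>0 < \<epsilon>\<close> by (simp add: K0_def add_pos_nonneg)
  have sol_norm: "norm (sol t) \<le> 3/2 * (K0 * \<epsilon>)" if "t \<in> {0..tm}" for t
    unfolding K0_def using \<open>a < 0\<close> \<open>0 < \<epsilon>\<close> \<open>\<gamma> \<le> 1/2\<close> near[OF that] that
    by (intro norm_le_of_near_linear_flow) auto
  define \<rho> where "\<rho> = K0 * \<epsilon> / 4"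
  have "0 < \<rho>" using \<open>0 < K0 * \<epsilon>\<close> by (simp add: \<rho>_def)
  have agree: "vfield a b M x = F x" if "t \<in> {0..tm}" "dist x (sol t) < \<rho>" for t x
  proof -
    have "norm x \<le> norm (sol t) + dist x (sol t)"
      by (metis dist_norm norm_triangle_sub add.commute)
    then have "norm x \<le> 2 * K0 * \<epsilon>"
      using sol_norm[OF that(1)] that(2) \<open>0 < K0 * \<epsilon>\<close> by (simp add: \<rho>_def mult.assoc)
    then show ?thesis by (simp add: F_eq)
  qed
  have above: "\<epsilon> < snd (sol tm)"
    using near[of tm] \<open>0 < tm\<close> \<open>0 < \<epsilon>\<close> \<open>\<gamma> < _\<close> by (intro snd_gt_of_near_linear_flow) auto
  have sd: "((\<lambda>t. snd (sol t)) has_real_derivative snd (vfield a b M (- k * \<epsilon>, \<epsilon>)))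
      (at 0 within {0..tm})"
    using has_vector_derivative_snd[OF sol_deriv[of 0]] agree[of 0 "sol 0"] \<open>0 < tm\<close> \<open>0 < \<rho>\<close>
    by (simp add: sol0)
  have sc: "continuous_on {0..tm} (\<lambda>t. snd (sol t))"
    by (intro continuous_intros continuous_on_vector_derivative[OF sol_deriv])
  obtain T where "0 < T" "T < tm" "snd (sol T) = \<epsilon>"
    and below: "\<And>s. 0 < s \<Longrightarrow> s < T \<Longrightarrow> snd (sol s) < \<epsilon>"
    using first_crossing_time[OF \<open>0 < tm\<close> sc _ sd downward above] sol0 by auto
  interpret impact_cycle a b k M \<epsilon> F L \<rho> sol T tm
    by unfold_locales
      (use \<open>0 < \<epsilon>\<close> \<open>0 < L\<close> \<open>0 < \<rho>\<close> \<open>0 < T\<close> \<open>T < tm\<close> lipF sol0 sol_deriv agree below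
        \<open>snd (sol T) = \<epsilon>\<close> above downward in auto)
  have "norm (cycle t) \<le> 2 * K0 * \<epsilon>" for t
  proof -
    obtain n r where "0 \<le> r" "r < T" "cycle t = sol r" by (rule cycle_decompose)
    then show ?thesis
      using sol_norm[of r] \<open>T < tm\<close> \<open>0 < K0 * \<epsilon>\<close> by (simp add: mult.assoc)
  qed
  then show ?thesis using cycle_periodic_one_impact cycle_finite_time_stable by blast
qed

lemma impact_cycle_exists:
  fixes a b k :: real and M :: "real \<times> real \<Rightarrow> real \<times> real"
  defines "K0 \<equiv> sqrt (1 + k\<^sup>2)"
  assumes "a < 0" and "0 < LM"
    and lipM: "\<forall>x\<in>cball 0 1. \<forall>y\<in>cball 0 1. norm (M x - M y) \<le> LM * norm (x - y)"
    and "0 < tm" and "1 < snd (linear_flow a b k tm)"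
    and "0 \<le> \<eta>" and small: "\<And>p. norm p \<le> r \<Longrightarrow> norm (M p) \<le> \<eta> * norm p"
    and h1: "2 * \<eta> * K0 \<le> 1"
    and h2: "2 * \<eta> * K0 * tm * exp ((2 * sqrt (a\<^sup>2 + b\<^sup>2) + 1) * tm)
               \<le> (min (1/2) ((snd (linear_flow a b k tm) - 1) / 2))\<^sup>2"
    and h3: "\<eta> * K0 < b * k - a"
    and "0 < \<epsilon>" and eps_small: "2 * K0 * \<epsilon> \<le> min r 1"
  shows "\<exists>z T. periodic_one_impact a b k M \<epsilon> z T \<and> finite_time_stable a b k M \<epsilon> z \<and>
           (\<forall>t. norm (z t) \<le> 2 * K0 * \<epsilon>)"
proof -
  define \<gamma> where "\<gamma> = min (1/2) ((snd (linear_flow a b k tm) - 1) / 2)"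
  define R where "R = 2 * K0 * \<epsilon>"
  define F where "F = trunc_field a b M R"
  define L where "L = sqrt (a\<^sup>2 + b\<^sup>2) + LM"
  have "0 < K0 * \<epsilon>" using \<open>0 < \<epsilon>\<close> by (simp add: K0_def add_pos_nonneg)
  have "0 < \<gamma>" "\<gamma> \<le> 1/2" "\<gamma> < snd (linear_flow a b k tm) - 1"
    using \<open>1 < snd (linear_flow a b k tm)\<close> by (auto simp: \<gamma>_def min_def)
  have R: "0 < R" "R \<le> r" "R \<le> 1" using \<open>0 < K0 * \<epsilon>\<close> eps_small by (auto simp: R_def)
  have "0 < L" using \<open>0 < LM\<close> by (simp add: L_def add_nonneg_pos)
  have lipF: "\<And>x y. dist (F x) (F y) \<le> L * dist x y"
    unfolding F_def L_def using R \<open>0 < LM\<close> by (intro trunc_field_lipschitz lipM) auto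
  obtain sol where sol0: "sol 0 = (- k * \<epsilon>, \<epsilon>)"
    and sol_deriv: "\<And>t. t \<in> {0..tm} \<Longrightarrow> (sol has_vector_derivative F (sol t)) (at t within {0..tm})"
    using lipschitz_ode_exists[OF lipF \<open>0 < L\<close>, of tm "(- k * \<epsilon>, \<epsilon>)"] \<open>0 < tm\<close> by auto
  have near: "norm (sol t - \<epsilon> *\<^sub>R linear_flow a b k t) \<le> \<gamma> * \<epsilon>" if "t \<in> {0..tm}" for t
    using \<open>a < 0\<close> \<open>0 \<le> \<eta>\<close> \<open>0 < \<epsilon>\<close> \<open>0 < \<gamma>\<close> R(2) small sol0 sol_deriv h1 h2 that
    by (intro trunc_solution_tracks_linear_flow[of a \<epsilon> \<eta> \<gamma> R k r M sol tm b])
      (auto simp: F_def R_def K0_def \<gamma>_def)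
  have "K0 * \<epsilon> \<le> r" using R(2) \<open>0 < K0 * \<epsilon>\<close> by (simp add: R_def mult.assoc)
  then have downward: "snd (vfield a b M (- k * \<epsilon>, \<epsilon>)) < 0"
    using \<open>0 < \<epsilon>\<close> small h3 unfolding K0_def by (intro snd_vfield_post_impact_neg)
  show ?thesis
    unfolding K0_def
  proof (rule impact_cycle_of_tracking_solution[OF \<open>a < 0\<close> \<open>0 < \<epsilon>\<close> \<open>0 < tm\<close> lipF \<open>0 < L\<close> _
        sol0 sol_deriv near \<open>\<gamma> \<le> 1/2\<close> \<open>\<gamma> < _\<close> downward])
    show "F x = vfield a b M x" if "norm x \<le> 2 * sqrt (1 + k\<^sup>2) * \<epsilon>" for x
      using that by (simp add: F_def R_def K0_def trunc_field_eq)
  qed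
qed

lemma impact_cycles_for_small_eps:
  fixes a b k :: real and M :: "real \<times> real \<Rightarrow> real \<times> real"
  assumes "a < 0" and "b > 0" and "k > 0"
    and "C2_map M" and "M 0 = 0" and "(M has_derivative (\<lambda>h. 0)) (at 0)"
    and "(a / b) * (3 * pi / 2) - (a / b) * arccot (- k) + ln (1 + k\<^sup>2) / 2
         > (a / b) * (- pi / 2) - (a / b) * arccot (- a / b) + ln (1 + a\<^sup>2 / b\<^sup>2) / 2"
  shows "\<forall>\<^sub>F \<epsilon> in at_right 0. \<exists>z T. periodic_one_impact a b k M \<epsilon> z T \<and>
           finite_time_stable a b k M \<epsilon> z \<and> (\<forall>t. norm (z t) \<le> 2 * sqrt (1 + k\<^sup>2) * \<epsilon>)"
proof -
  obtain tm where "0 < tm" "1 < snd (linear_flow a b k tm)"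
    using linear_flow_rises_above_one[OF assms(1-3,7)] by blast
  obtain LM where "0 < LM"
    and lipM: "\<forall>x\<in>cball 0 1. \<forall>y\<in>cball 0 1. norm (M x - M y) \<le> LM * norm (x - y)"
    using C2_map_lipschitz_on_cball[OF assms(4)] by blast
  define K0 where "K0 = sqrt (1 + k\<^sup>2)"
  define \<gamma> where "\<gamma> = min (1/2) ((snd (linear_flow a b k tm) - 1) / 2)"
  define C where "C = 2 * K0 * tm * exp ((2 * sqrt (a\<^sup>2 + b\<^sup>2) + 1) * tm)"
  have "0 < \<gamma>" using \<open>1 < snd (linear_flow a b k tm)\<close> by (simp add: \<gamma>_def)
  have "0 < b * k" using assms(2,3) by simp
  then have "0 < b * k - a" using assms(1) by simp
  have lim: "((\<lambda>x::real. x * c) \<longlongrightarrow> 0) (at_right 0)" for c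
    by (rule tendsto_mult_left_zero[OF tendsto_ident_at])
  have "\<forall>\<^sub>F \<eta> in at_right 0. 0 < \<eta> \<and> \<eta> * (2 * K0) < 1 \<and> \<eta> * C < \<gamma>\<^sup>2 \<and> \<eta> * K0 < b * k - a"
    using \<open>0 < \<gamma>\<close> \<open>0 < b * k - a\<close>
    by (intro eventually_conj eventually_at_right_less order_tendstoD(2)[OF lim]) auto
  then obtain \<eta> where "0 < \<eta>" "\<eta> * (2 * K0) < 1" "\<eta> * C < \<gamma>\<^sup>2" "\<eta> * K0 < b * k - a"
    using eventually_happens'[OF trivial_limit_at_right_real] by blast
  obtain r where "0 < r" and small: "\<forall>p. norm p \<le> r \<longrightarrow> norm (M p) \<le> \<eta> * norm p"
    using has_derivative_zero_bound[OF assms(5,6) \<open>0 < \<eta>\<close>] by blast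
  have "\<forall>\<^sub>F \<epsilon> in at_right 0. 0 < \<epsilon> \<and> \<epsilon> * (2 * K0) < min r 1"
    using \<open>0 < r\<close> by (intro eventually_conj eventually_at_right_less order_tendstoD(2)[OF lim]) auto
  then show ?thesis
  proof (rule eventually_mono)
    fix \<epsilon> assume "0 < \<epsilon> \<and> \<epsilon> * (2 * K0) < min r 1"
    then show "\<exists>z T. periodic_one_impact a b k M \<epsilon> z T \<and> finite_time_stable a b k M \<epsilon> z \<and>
        (\<forall>t. norm (z t) \<le> 2 * sqrt (1 + k\<^sup>2) * \<epsilon>)"
      using \<open>0 < \<eta>\<close> \<open>\<eta> * (2 * K0) < 1\<close> \<open>\<eta> * C < \<gamma>\<^sup>2\<close> \<open>\<eta> * K0 < b * k - a\<close> small
      by (intro impact_cycle_exists[OF \<open>a < 0\<close> \<open>0 < LM\<close> lipM \<open>0 < tm\<close> \<open>1 < _\<close>])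
        (auto simp: K0_def C_def \<gamma>_def mult_ac)
  qed
qed

theorem mainTheorem3:
  fixes a b k :: real and M :: "real \<times> real \<Rightarrow> real \<times> real"
  assumes "a < 0" and "b > 0" and "k > 0"
    and "C2_map M" and "M 0 = 0" and "(M has_derivative (\<lambda>h. 0)) (at 0)"
    and "(a / b) * (3 * pi / 2) - (a / b) * arccot (- k) + ln (1 + k\<^sup>2) / 2
         > (a / b) * (- pi / 2) - (a / b) * arccot (- a / b) + ln (1 + a\<^sup>2 / b\<^sup>2) / 2"
  shows "\<exists>\<epsilon>0>0. \<exists>zs :: real \<Rightarrow> real \<Rightarrow> real \<times> real. \<exists>Ts :: real \<Rightarrow> real.
           (\<forall>\<epsilon>. 0 < \<epsilon> \<and> \<epsilon> < \<epsilon>0 \<longrightarrow>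
               periodic_one_impact a b k M \<epsilon> (zs \<epsilon>) (Ts \<epsilon>) \<and>
               finite_time_stable a b k M \<epsilon> (zs \<epsilon>)) \<and>
           (\<forall>\<eta>>0. \<exists>\<epsilon>1>0. \<forall>\<epsilon>. 0 < \<epsilon> \<and> \<epsilon> < \<epsilon>1 \<and> \<epsilon> < \<epsilon>0 \<longrightarrow>
               (\<forall>t\<ge>0. norm (zs \<epsilon> t) \<le> \<eta>))"
proof -
  define C where "C = 2 * sqrt (1 + k\<^sup>2)"
  have "0 < C" by (simp add: C_def add_pos_nonneg)
  obtain \<epsilon>0 where "0 < \<epsilon>0" and "\<forall>\<epsilon>. \<exists>z T. 0 < \<epsilon> \<and> \<epsilon> < \<epsilon>0 \<longrightarrow>
      periodic_one_impact a b k M \<epsilon> z T \<and> finite_time_stable a b k M \<epsilon> z \<and> (\<forall>t. norm (z t) \<le> C * \<epsilon>)"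
    using impact_cycles_for_small_eps[OF assms] unfolding eventually_at_right_field C_def by auto
  then obtain zs Ts where cycles: "\<And>\<epsilon>. 0 < \<epsilon> \<Longrightarrow> \<epsilon> < \<epsilon>0 \<Longrightarrow>
      periodic_one_impact a b k M \<epsilon> (zs \<epsilon>) (Ts \<epsilon>) \<and> finite_time_stable a b k M \<epsilon> (zs \<epsilon>) \<and>
      (\<forall>t. norm (zs \<epsilon> t) \<le> C * \<epsilon>)"
    by metis
  have shrink: "norm (zs \<epsilon> t) \<le> \<eta>" if "0 < \<epsilon>" "\<epsilon> < \<eta> / C" "\<epsilon> < \<epsilon>0" for \<epsilon> \<eta> t
    using cycles[OF that(1,3)] that(2) \<open>0 < C\<close> by (smt (verit) pos_less_divide_eq mult.commute)
  show ?thesis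
  proof (rule exI[of _ \<epsilon>0], intro conjI exI[of _ zs] exI[of _ Ts] allI impI)
    show "0 < \<epsilon>0" by fact
    show "periodic_one_impact a b k M \<epsilon> (zs \<epsilon>) (Ts \<epsilon>)" "finite_time_stable a b k M \<epsilon> (zs \<epsilon>)"
      if "0 < \<epsilon> \<and> \<epsilon> < \<epsilon>0" for \<epsilon>
      using cycles that by auto
    show "\<exists>\<epsilon>1>0. \<forall>\<epsilon>. 0 < \<epsilon> \<and> \<epsilon> < \<epsilon>1 \<and> \<epsilon> < \<epsilon>0 \<longrightarrow> (\<forall>t\<ge>0. norm (zs \<epsilon> t) \<le> \<eta>)"
      if "0 < \<eta>" for \<eta>
      using that \<open>0 < C\<close> shrink by (intro exI[of _ "\<eta> / C"]) auto
  qed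
qed

end
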